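(* Let $A$ be a brick gentle algebra. For any string $w\in\mathrm{Str}(A)$ we have $\overline{\{w\}}=\{w\}$. Consequently, every covering relation in $\mathrm{Bic}(A)$ is of the form $(B,B\sqcup\{w\})$ where $w\notin B$ is a string such that $B$ contains exactly one split from each break of $w$.
   Context: $k$ is a field, $A=kQ/I$ with $Q$ a finite connected quiver and $I$ an admissible ideal generated by paths (paths composed right to left). $A$ is gentle if (S1) each vertex has at most two incoming and two outgoing arrows; (S2) for each arrow $\alpha$ there is at most one arrow $\beta$ with $\alpha\beta$ a path not in $I$ and at most one arrow $\gamma$ with $\gamma\alpha$ a path not in $I$; (G1) $I$ is generated by paths of length two; (G2) for each arrow $\alpha$ there is at most one arrow $\beta$ with $\alpha\beta$ a path in $I$ and at most one $\gamma$ with $\gamma\alpha$ a path in $I$. A brick gentle algebra is a gentle algebra all of whose indecomposable finitely generated modules have endomorphism ring a division ring. Strings: for an arrow $\gamma$, $\gamma^{-1}$ is a formal inverse with $s(\gamma^{-1})=t(\gamma)$, $t(\gamma^{-1})=s(\gamma)$. A string of length $d\ge1$ is a word $w=\gamma_d^{\epsilon_d}\cdots\gamma_1^{\epsilon_1}$ ($\gamma_i$ arrows, $\epsilon_i=\pm1$) with $s(\gamma_{i+1}^{\epsilon_{i+1}})=t(\gamma_i^{\epsilon_i})$, $\gamma_{i+1}^{\epsilon_{i+1}}\neq\gamma_i^{-\epsilon_i}$, such that neither $w$ nor $w^{-1}=\gamma_1^{-\epsilon_1}\cdots\gamma_d^{-\epsilon_d}$ contains a subword which is a path lying in $I$; each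 vertex $i$ also gives a length-zero string $e_i$. $\mathrm{Str}(A)$ is the set of strings with $w$ identified with $w^{-1}$. A concatenation of strings $u,v$ is a string of the form $v\gamma u$ or $v\gamma^{-1}u$ with $\gamma$ an arrow (written $v\gamma^{\pm1}u$; $u,v$ may be taken in either orientation). $X\subseteq\mathrm{Str}(A)$ is closed if for all $u,v\in X$ every string which is a concatenation of $u$ and $v$ lies in $X$; $\overline{X}$ is the smallest closed set containing $X$. $B$ is biclosed if $B$ and $\mathrm{Str}(A)\setminus B$ are both closed; $\mathrm{Bic}(A)$ is the set of biclosed sets ordered by inclusion. For $w=\gamma_d^{\epsilon_d}\cdots\gamma_1^{\epsilon_1}$ and $1\le j\le d$, writing $w=w_1\gamma_j^{\epsilon_j}w_2$ (with $w_1,w_2$ strings, possibly of length zero), the pair $\{w_1,w_2\}$ is a break of $w$ and $w_1,w_2$ are splits of $w$. *)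

theory Defs
  imports "Jordan_Normal_Form.Matrix"
begin

text \<open>Bound quiver data: vertex set V, arrow set Arr, source s, target t,
  and Rel, the set of length-two generators of I: (alpha, beta) in Rel means that
  the path alpha beta (first beta, then alpha; t beta = s alpha) lies in I.\<close>

definition composable :: "('a \<Rightarrow> 'v) \<Rightarrow> ('a \<Rightarrow> 'v) \<Rightarrow> 'a \<Rightarrow> 'a \<Rightarrow> bool" where
  "composable s t al be \<longleftrightarrow> t be = s al"

definition is_path :: "'a set \<Rightarrow> ('a \<Rightarrow> 'v) \<Rightarrow> ('a \<Rightarrow> 'v) \<Rightarrow> 'a list \<Rightarrow> bool" where
  "is_path Arr s t p \<longleftrightarrow> p \<noteq> [] \<and> set p \<subseteq> Arr \<and>
     (\<forall>i. Suc i < length p \<longrightarrow> t (p ! i) = s (p ! Suc i))"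

definition path_in_I :: "('a \<times> 'a) set \<Rightarrow> 'a list \<Rightarrow> bool" where
  "path_in_I Rel p \<longleftrightarrow> (\<exists>i. Suc i < length p \<and> (p ! Suc i, p ! i) \<in> Rel)"

definition quiver_connected :: "'v set \<Rightarrow> 'a set \<Rightarrow> ('a \<Rightarrow> 'v) \<Rightarrow> ('a \<Rightarrow> 'v) \<Rightarrow> bool" where
  "quiver_connected V Arr s t \<longleftrightarrow> V \<noteq> {} \<and>
     (\<forall>u\<in>V. \<forall>v\<in>V. (u, v) \<in> ({(s a, t a) | a. a \<in> Arr} \<union> {(t a, s a) | a. a \<in> Arr})\<^sup>*)"

definition bound_quiver :: "'v set \<Rightarrow> 'a set \<Rightarrow> ('a \<Rightarrow> 'v) \<Rightarrow> ('a \<Rightarrow> 'v) \<Rightarrow> ('a \<times> 'a) set \<Rightarrow> bool" where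
  "bound_quiver V Arr s t Rel \<longleftrightarrow> finite V \<and> finite Arr \<and>
     (\<forall>a\<in>Arr. s a \<in> V \<and> t a \<in> V) \<and> quiver_connected V Arr s t \<and>
     (\<forall>(al, be)\<in>Rel. al \<in> Arr \<and> be \<in> Arr \<and> composable s t al be) \<and>
     \<comment> \<open>admissibility: all sufficiently long paths lie in I\<close>
     (\<exists>N. \<forall>p. is_path Arr s t p \<and> length p \<ge> N \<longrightarrow> path_in_I Rel p)"

definition gentle :: "'v set \<Rightarrow> 'a set \<Rightarrow> ('a \<Rightarrow> 'v) \<Rightarrow> ('a \<Rightarrow> 'v) \<Rightarrow> ('a \<times> 'a) set \<Rightarrow> bool" where
  "gentle V Arr s t Rel \<longleftrightarrow> bound_quiver V Arr s t Rel \<and>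
     \<comment> \<open>S1\<close>
     (\<forall>v\<in>V. card {a\<in>Arr. t a = v} \<le> 2 \<and> card {a\<in>Arr. s a = v} \<le> 2) \<and>
     \<comment> \<open>S2\<close>
     (\<forall>al\<in>Arr. (\<forall>b1\<in>Arr. \<forall>b2\<in>Arr. composable s t al b1 \<and> (al, b1) \<notin> Rel \<and>
                  composable s t al b2 \<and> (al, b2) \<notin> Rel \<longrightarrow> b1 = b2) \<and>
                (\<forall>g1\<in>Arr. \<forall>g2\<in>Arr. composable s t g1 al \<and> (g1, al) \<notin> Rel \<and>
                  composable s t g2 al \<and> (g2, al) \<notin> Rel \<longrightarrow> g1 = g2)) \<and>
     \<comment> \<open>G2 (G1 is built into the presentation by length-two generators Rel)\<close>
     (\<forall>al\<in>Arr. (\<forall>b1 b2. (al, b1) \<in> Rel \<and> (al, b2) \<in> Rel \<longrightarrow> b1 = b2) \<and>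
                (\<forall>g1 g2. (g1, al) \<in> Rel \<and> (g2, al) \<in> Rel \<longrightarrow> g1 = g2))"

definition is_rep :: "'v set \<Rightarrow> 'a set \<Rightarrow> ('a \<Rightarrow> 'v) \<Rightarrow> ('a \<Rightarrow> 'v) \<Rightarrow> ('a \<times> 'a) set \<Rightarrow>
    ('v \<Rightarrow> nat) \<Rightarrow> ('a \<Rightarrow> 'k::field mat) \<Rightarrow> bool" where
  "is_rep V Arr s t Rel d M \<longleftrightarrow>
     (\<forall>a\<in>Arr. M a \<in> carrier_mat (d (t a)) (d (s a))) \<and>
     (\<forall>(al, be)\<in>Rel. M al * M be = 0\<^sub>m (d (t al)) (d (s be)))"

definition is_endo :: "'v set \<Rightarrow> 'a set \<Rightarrow> ('a \<Rightarrow> 'v) \<Rightarrow> ('a \<Rightarrow> 'v) \<Rightarrow>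
    ('v \<Rightarrow> nat) \<Rightarrow> ('a \<Rightarrow> 'k::field mat) \<Rightarrow> ('v \<Rightarrow> 'k mat) \<Rightarrow> bool" where
  "is_endo V Arr s t d M f \<longleftrightarrow>
     (\<forall>v\<in>V. f v \<in> carrier_mat (d v) (d v)) \<and>
     (\<forall>a\<in>Arr. f (t a) * M a = M a * f (s a))"

definition indecomposable_rep :: "'v set \<Rightarrow> 'a set \<Rightarrow> ('a \<Rightarrow> 'v) \<Rightarrow> ('a \<Rightarrow> 'v) \<Rightarrow>
    ('v \<Rightarrow> nat) \<Rightarrow> ('a \<Rightarrow> 'k::field mat) \<Rightarrow> bool" where
  "indecomposable_rep V Arr s t d M \<longleftrightarrow> (\<exists>v\<in>V. d v > 0) \<and>
     (\<forall>e. is_endo V Arr s t d M e \<and> (\<forall>v\<in>V. e v * e v = e v) \<longrightarrow>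
        (\<forall>v\<in>V. e v = 0\<^sub>m (d v) (d v)) \<or> (\<forall>v\<in>V. e v = 1\<^sub>m (d v)))"

definition endo_division :: "'v set \<Rightarrow> 'a set \<Rightarrow> ('a \<Rightarrow> 'v) \<Rightarrow> ('a \<Rightarrow> 'v) \<Rightarrow>
    ('v \<Rightarrow> nat) \<Rightarrow> ('a \<Rightarrow> 'k::field mat) \<Rightarrow> bool" where
  "endo_division V Arr s t d M \<longleftrightarrow>
     (\<forall>f. is_endo V Arr s t d M f \<and> (\<exists>v\<in>V. f v \<noteq> 0\<^sub>m (d v) (d v)) \<longrightarrow>
        (\<exists>g. is_endo V Arr s t d M g \<and> (\<forall>v\<in>V. f v * g v = 1\<^sub>m (d v) \<and> g v * f v = 1\<^sub>m (d v))))"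

definition brick_gentle :: "'k::field itself \<Rightarrow> 'v set \<Rightarrow> 'a set \<Rightarrow> ('a \<Rightarrow> 'v) \<Rightarrow> ('a \<Rightarrow> 'v) \<Rightarrow>
    ('a \<times> 'a) set \<Rightarrow> bool" where
  "brick_gentle TYPE('k) V Arr s t Rel \<longleftrightarrow> gentle V Arr s t Rel \<and>
     (\<forall>d (M :: 'a \<Rightarrow> 'k mat). is_rep V Arr s t Rel d M \<and> indecomposable_rep V Arr s t d M \<longrightarrow>
        endo_division V Arr s t d M)"

text \<open>A letter (a, True) is the arrow a, (a, False) is its formal inverse.
  A raw string is either the trivial string at a vertex, or a nonempty list of
  letters [l1, ..., ld] in order of application (w = ld ... l1).\<close>

datatype ('v, 'a) rawstr = Triv 'v | Word "('a \<times> bool) list"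

definition lsrc :: "('a \<Rightarrow> 'v) \<Rightarrow> ('a \<Rightarrow> 'v) \<Rightarrow> 'a \<times> bool \<Rightarrow> 'v" where
  "lsrc s t l = (if snd l then s (fst l) else t (fst l))"

definition ltgt :: "('a \<Rightarrow> 'v) \<Rightarrow> ('a \<Rightarrow> 'v) \<Rightarrow> 'a \<times> bool \<Rightarrow> 'v" where
  "ltgt s t l = (if snd l then t (fst l) else s (fst l))"

fun letters :: "('v, 'a) rawstr \<Rightarrow> ('a \<times> bool) list" where
  "letters (Triv v) = []"
| "letters (Word ls) = ls"

fun str_src :: "('a \<Rightarrow> 'v) \<Rightarrow> ('a \<Rightarrow> 'v) \<Rightarrow> ('v, 'a) rawstr \<Rightarrow> 'v" where
  "str_src s t (Triv v) = v"
| "str_src s t (Word ls) = lsrc s t (hd ls)"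

fun str_tgt :: "('a \<Rightarrow> 'v) \<Rightarrow> ('a \<Rightarrow> 'v) \<Rightarrow> ('v, 'a) rawstr \<Rightarrow> 'v" where
  "str_tgt s t (Triv v) = v"
| "str_tgt s t (Word ls) = ltgt s t (last ls)"

fun inv_str :: "('v, 'a) rawstr \<Rightarrow> ('v, 'a) rawstr" where
  "inv_str (Triv v) = Triv v"
| "inv_str (Word ls) = Word (rev (map (\<lambda>(a, b). (a, \<not> b)) ls))"

definition is_string :: "'v set \<Rightarrow> 'a set \<Rightarrow> ('a \<Rightarrow> 'v) \<Rightarrow> ('a \<Rightarrow> 'v) \<Rightarrow> ('a \<times> 'a) set \<Rightarrow>
    ('v, 'a) rawstr \<Rightarrow> bool" where
  "is_string V Arr s t Rel w \<longleftrightarrow> (case w of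
      Triv v \<Rightarrow> v \<in> V
    | Word ls \<Rightarrow> ls \<noteq> [] \<and> fst ` set ls \<subseteq> Arr \<and>
        (\<forall>i. Suc i < length ls \<longrightarrow>
           lsrc s t (ls ! Suc i) = ltgt s t (ls ! i) \<and>
           ls ! Suc i \<noteq> (fst (ls ! i), \<not> snd (ls ! i)) \<and>
           \<comment> \<open>no subword of w that is a path in I\<close>
           \<not> (snd (ls ! i) \<and> snd (ls ! Suc i) \<and> (fst (ls ! Suc i), fst (ls ! i)) \<in> Rel) \<and>
           \<comment> \<open>no subword of w inverse that is a path in I\<close>
           \<not> (\<not> snd (ls ! i) \<and> \<not> snd (ls ! Suc i) \<and> (fst (ls ! i), fst (ls ! Suc i)) \<in> Rel)))"

definition str_class :: "('v, 'a) rawstr \<Rightarrow> ('v, 'a) rawstr set" where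
  "str_class w = {w, inv_str w}"

definition Str :: "'v set \<Rightarrow> 'a set \<Rightarrow> ('a \<Rightarrow> 'v) \<Rightarrow> ('a \<Rightarrow> 'v) \<Rightarrow> ('a \<times> 'a) set \<Rightarrow>
    ('v, 'a) rawstr set set" where
  "Str V Arr s t Rel = str_class ` {w. is_string V Arr s t Rel w}"

text \<open>x is a concatenation v gamma^{+-1} u of the raw strings u and v.\<close>
definition raw_concat :: "'v set \<Rightarrow> 'a set \<Rightarrow> ('a \<Rightarrow> 'v) \<Rightarrow> ('a \<Rightarrow> 'v) \<Rightarrow> ('a \<times> 'a) set \<Rightarrow>
    ('v, 'a) rawstr \<Rightarrow> ('v, 'a) rawstr \<Rightarrow> ('v, 'a) rawstr \<Rightarrow> bool" where
  "raw_concat V Arr s t Rel x u v \<longleftrightarrow> is_string V Arr s t Rel x \<and>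
     is_string V Arr s t Rel u \<and> is_string V Arr s t Rel v \<and>
     (\<exists>l. fst l \<in> Arr \<and> lsrc s t l = str_tgt s t u \<and> ltgt s t l = str_src s t v \<and>
          x = Word (letters u @ [l] @ letters v))"

definition is_concat :: "'v set \<Rightarrow> 'a set \<Rightarrow> ('a \<Rightarrow> 'v) \<Rightarrow> ('a \<Rightarrow> 'v) \<Rightarrow> ('a \<times> 'a) set \<Rightarrow>
    ('v, 'a) rawstr set \<Rightarrow> ('v, 'a) rawstr set \<Rightarrow> ('v, 'a) rawstr set \<Rightarrow> bool" where
  "is_concat V Arr s t Rel c a b \<longleftrightarrow>
     (\<exists>x\<in>c. \<exists>u\<in>a. \<exists>v\<in>b. raw_concat V Arr s t Rel x u v)"

definition str_closed :: "'v set \<Rightarrow> 'a set \<Rightarrow> ('a \<Rightarrow> 'v) \<Rightarrow> ('a \<Rightarrow> 'v) \<Rightarrow> ('a \<times> 'a) set \<Rightarrow>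
    ('v, 'a) rawstr set set \<Rightarrow> bool" where
  "str_closed V Arr s t Rel X \<longleftrightarrow>
     (\<forall>a\<in>X. \<forall>b\<in>X. \<forall>c\<in>Str V Arr s t Rel. is_concat V Arr s t Rel c a b \<longrightarrow> c \<in> X)"

definition str_closure :: "'v set \<Rightarrow> 'a set \<Rightarrow> ('a \<Rightarrow> 'v) \<Rightarrow> ('a \<Rightarrow> 'v) \<Rightarrow> ('a \<times> 'a) set \<Rightarrow>
    ('v, 'a) rawstr set set \<Rightarrow> ('v, 'a) rawstr set set" where
  "str_closure V Arr s t Rel X =
     \<Inter>{Y. X \<subseteq> Y \<and> Y \<subseteq> Str V Arr s t Rel \<and> str_closed V Arr s t Rel Y}"

definition biclosed :: "'v set \<Rightarrow> 'a set \<Rightarrow> ('a \<Rightarrow> 'v) \<Rightarrow> ('a \<Rightarrow> 'v) \<Rightarrow> ('a \<times> 'a) set \<Rightarrow>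
    ('v, 'a) rawstr set set \<Rightarrow> bool" where
  "biclosed V Arr s t Rel B \<longleftrightarrow> B \<subseteq> Str V Arr s t Rel \<and> str_closed V Arr s t Rel B \<and>
     str_closed V Arr s t Rel (Str V Arr s t Rel - B)"

definition bic_covers :: "'v set \<Rightarrow> 'a set \<Rightarrow> ('a \<Rightarrow> 'v) \<Rightarrow> ('a \<Rightarrow> 'v) \<Rightarrow> ('a \<times> 'a) set \<Rightarrow>
    ('v, 'a) rawstr set set \<Rightarrow> ('v, 'a) rawstr set set \<Rightarrow> bool" where
  "bic_covers V Arr s t Rel B B' \<longleftrightarrow> biclosed V Arr s t Rel B \<and> biclosed V Arr s t Rel B' \<and>
     B \<subset> B' \<and> \<not> (\<exists>C. biclosed V Arr s t Rel C \<and> B \<subset> C \<and> C \<subset> B')"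

text \<open>Splits of a raw string with letters [l1,...,ld] at position j (1 \<le> j \<le> d):
  w = w1 lj w2, with w2 = l_{j-1}...l_1 and w1 = l_d ... l_{j+1}
  (trivial strings at the appropriate vertex when empty).\<close>
definition split_low :: "('a \<Rightarrow> 'v) \<Rightarrow> ('a \<Rightarrow> 'v) \<Rightarrow> ('a \<times> bool) list \<Rightarrow> nat \<Rightarrow> ('v, 'a) rawstr" where
  "split_low s t ls j = (if j = 1 then Triv (lsrc s t (ls ! 0)) else Word (take (j - 1) ls))"

definition split_high :: "('a \<Rightarrow> 'v) \<Rightarrow> ('a \<Rightarrow> 'v) \<Rightarrow> ('a \<times> bool) list \<Rightarrow> nat \<Rightarrow> ('v, 'a) rawstr" where
  "split_high s t ls j = (if j = length ls then Triv (ltgt s t (last ls)) else Word (drop j ls))"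

definition breaks :: "('a \<Rightarrow> 'v) \<Rightarrow> ('a \<Rightarrow> 'v) \<Rightarrow> ('v, 'a) rawstr \<Rightarrow>
    (('v, 'a) rawstr set \<times> ('v, 'a) rawstr set) set" where
  "breaks s t w = {(str_class (split_high s t (letters w) j), str_class (split_low s t (letters w) j)) | j.
                    1 \<le> j \<and> j \<le> length (letters w)}"

end

(*
  If a string x were a concatenation of a string w with itself (w or its inverse on either side
  of the connecting letter), the string module M(x) would contradict brickness. It is
  indecomposable: comparing the walks leaving its basis vectors gives a well-founded order for
  which the coefficient matrix of every endomorphism is triangular with constant diagonal, so an
  idempotent endomorphism is 0 or 1. But sending the basis vectors of the copy of w at one end of
  x to those of the copy at the other end is a nonzero endomorphism with square zero. Hence {w}
  is closed; and since a repeated letter l in a string yields such a self-concatenation y l y,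
  strings have at most 2 |Arr| letters.

  Let B' cover B in Bic(A). Among the w in B' - B all of whose breaks have a split in B (a
  shortest element of B' - B is one, as B' is co-closed) choose a longest one. By induction on
  the length of b in B, every concatenation of w and b lies in B, for otherwise it would be a
  longer such element. Hence B with w added is biclosed, so it is B'. Since B is closed and w is
  not in B, no break of w has both splits in B.
*)

theory Submission
  imports Defs
begin

section \<open>Strings, splits and concatenations\<close>

definition inv_letter :: "'a \<times> bool \<Rightarrow> 'a \<times> bool" where
  "inv_letter c = (fst c, \<not> snd c)"

lemma inv_letter_simps[simp]: "fst (inv_letter c) = fst c" "snd (inv_letter c) = (\<not> snd c)"
    "inv_letter (inv_letter c) = c"
  by (auto simp: inv_letter_def)

lemma inv_letter_eq_iff[simp]: "inv_letter c = inv_letter d \<longleftrightarrow> c = d"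
  by (metis inv_letter_simps(3))

lemma inv_letter_neq[simp]: "inv_letter c \<noteq> c" "c \<noteq> inv_letter c"
  by (auto simp: inv_letter_def prod_eq_iff)

lemma lsrc_inv_letter[simp]: "lsrc s t (inv_letter c) = ltgt s t c" and ltgt_inv_letter[simp]:
    "ltgt s t (inv_letter c) = lsrc s t c"
  by (auto simp: lsrc_def ltgt_def inv_letter_def)

lemma inv_letter_case_prod: "(\<lambda>(a, b). (a, \<not> b)) = inv_letter"
  by (auto simp: inv_letter_def fun_eq_iff)

definition letters_adjacent ::
    "('a \<Rightarrow> 'v) \<Rightarrow> ('a \<Rightarrow> 'v) \<Rightarrow> ('a \<times> 'a) set \<Rightarrow> 'a \<times> bool \<Rightarrow> 'a \<times> bool \<Rightarrow> bool" where
  "letters_adjacent s t Rel c1 c2 \<longleftrightarrow> lsrc s t c2 = ltgt s t c1 \<and> c2 \<noteq> inv_letter c1 \<and>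
     \<not> (snd c1 \<and> snd c2 \<and> (fst c2, fst c1) \<in> Rel) \<and>
     \<not> (\<not> snd c1 \<and> \<not> snd c2 \<and> (fst c1, fst c2) \<in> Rel)"

lemma is_string_Word:
  "is_string V Arr s t Rel (Word ls) \<longleftrightarrow> ls \<noteq> [] \<and> fst ` set ls \<subseteq> Arr
      \<and> successively (letters_adjacent s t Rel) ls"
  unfolding is_string_def successively_conv_nth letters_adjacent_def inv_letter_def by auto

lemma is_string_Triv: "is_string V Arr s t Rel (Triv v) \<longleftrightarrow> v \<in> V"
  by (simp add: is_string_def)

lemma letters_adjacent_inv: "letters_adjacent s t Rel c1 c2
    \<Longrightarrow> letters_adjacent s t Rel (inv_letter c2) (inv_letter c1)"
  unfolding letters_adjacent_def inv_letter_def lsrc_def ltgt_def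
  by (auto simp: prod_eq_iff split: if_splits)

lemma inv_inv_str[simp]: "inv_str (inv_str w) = w"
  by (cases w) (simp_all add: inv_letter_case_prod rev_map comp_def)

lemma letters_inv_str: "letters (inv_str w) = rev (map inv_letter (letters w))"
  by (cases w) (simp_all add: inv_letter_case_prod)

lemma is_string_inv_str:
  assumes "is_string V Arr s t Rel w" shows "is_string V Arr s t Rel (inv_str w)"
proof (cases w)
  case (Triv x1) then show ?thesis using assms by simp
next
  case (Word ls)
  have "successively (letters_adjacent s t Rel) ls" using assms Word by (simp add: is_string_Word)
  then have "successively (\<lambda>x y. letters_adjacent s t Rel (inv_letter y) (inv_letter x)) ls"
    by (rule successively_mono) (simp add: letters_adjacent_inv)
  then show ?thesis using assms Word
    by (auto simp: is_string_Word inv_letter_case_prod successively_map image_image)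
qed

lemma str_class_inv_str[simp]: "str_class (inv_str w) = str_class w"
  by (auto simp: str_class_def)

lemma Str_memI: "is_string V Arr s t Rel w \<Longrightarrow> str_class w \<in> Str V Arr s t Rel"
  by (simp add: Str_def)

lemma Str_memD:
  assumes "c \<in> Str V Arr s t Rel" "u \<in> c"
  shows "c = str_class u" "is_string V Arr s t Rel u"
proof -
  obtain w where w: "is_string V Arr s t Rel w" "c = str_class w" using assms
    by (auto simp: Str_def)
  then have "u = w \<or> u = inv_str w" using assms by (auto simp: str_class_def)
  then show "c = str_class u" "is_string V Arr s t Rel u" using w is_string_inv_str by auto
qed

lemma str_class_self: "x \<in> str_class x" and str_class_inv: "inv_str x \<in> str_class x"
  by (auto simp: str_class_def)

lemma str_class_cases: "u \<in> str_class w \<Longrightarrow> v \<in> str_class w \<Longrightarrow> v = u \<or> v = inv_str u"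
  by (auto simp: str_class_def)

lemma Str_inv_str_mem: "a \<in> Str V Arr s t Rel \<Longrightarrow> u \<in> a \<Longrightarrow> inv_str u \<in> a"
  using Str_memD(1) str_class_inv by metis

lemma letters_Nil_Triv: "is_string V Arr s t Rel u \<Longrightarrow> letters u = [] \<Longrightarrow> \<exists>v0. u = Triv v0"
  by (cases u) (auto simp: is_string_def)

lemma Word_letters: "is_string V Arr s t Rel u \<Longrightarrow> letters u \<noteq> [] \<Longrightarrow> u = Word (letters u)"
  by (cases u) auto

lemma length_letters_inv_str: "length (letters (inv_str x)) = length (letters x)"
  by (simp add: letters_inv_str)

lemma str_tgt_inv: "is_string V Arr s t Rel w \<Longrightarrow> str_tgt s t (inv_str w) = str_src s t w"
  by (cases w) (auto simp: is_string_def inv_letter_case_prod last_rev hd_map)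

lemma str_src_inv: "is_string V Arr s t Rel w \<Longrightarrow> str_src s t (inv_str w) = str_tgt s t w"
  by (cases w) (auto simp: is_string_def inv_letter_case_prod hd_rev last_map)

lemma successively_take: "successively P xs \<Longrightarrow> successively P (take k xs)"
  by (metis append_take_drop_id successively_append_iff)

lemma successively_drop: "successively P xs \<Longrightarrow> successively P (drop k xs)"
  by (metis append_take_drop_id successively_append_iff)

lemma is_string_take: "is_string V Arr s t Rel (Word ls) \<Longrightarrow> 0 < k
    \<Longrightarrow> is_string V Arr s t Rel (Word (take k ls))"
  unfolding is_string_Word using successively_take[of _ ls k] set_take_subset[of k ls] by auto

lemma is_string_drop: "is_string V Arr s t Rel (Word ls) \<Longrightarrow> k < length ls
    \<Longrightarrow> is_string V Arr s t Rel (Word (drop k ls))"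
  unfolding is_string_Word using successively_drop[of _ ls k] set_drop_subset[of k ls] by auto

lemma is_string_adjacent: "is_string V Arr s t Rel (Word ls) \<Longrightarrow> Suc i < length ls
    \<Longrightarrow> lsrc s t (ls ! Suc i) = ltgt s t (ls ! i)"
  unfolding is_string_Word successively_conv_nth letters_adjacent_def by blast

lemma is_string_arrow: "is_string V Arr s t Rel (Word ls) \<Longrightarrow> i < length ls \<Longrightarrow> fst (ls ! i) \<in> Arr"
  unfolding is_string_Word by auto

lemma lsrc_V: "(\<And>a. a \<in> Arr \<Longrightarrow> s a \<in> V \<and> t a \<in> V) \<Longrightarrow> fst c \<in> Arr \<Longrightarrow> lsrc s t c \<in> V \<and> ltgt s t c \<in> V"
  by (auto simp: lsrc_def ltgt_def)

lemma is_string_splits: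
  assumes E: "\<And>a. a \<in> Arr \<Longrightarrow> s a \<in> V \<and> t a \<in> V" and st: "is_string V Arr s t Rel (Word ls)"
    and j: "1 \<le> j" "j \<le> length ls"
  shows "is_string V Arr s t Rel (split_low s t ls j)
      \<and> is_string V Arr s t Rel (split_high s t ls j)"
proof
  show "is_string V Arr s t Rel (split_low s t ls j)"
  proof (cases "j = 1")
    case True
    have "fst (ls ! 0) \<in> Arr" using is_string_arrow[OF st, of 0] j by (cases ls) auto
    then have "lsrc s t (ls ! 0) \<in> V" using E[of "fst (ls ! 0)"] by (auto simp: lsrc_def)
    then show ?thesis using True by (simp add: split_low_def is_string_Triv)
  next
    case False then show ?thesis using is_string_take[OF st, of "j - 1"] j
      by (simp add: split_low_def)
  qed
  show "is_string V Arr s t Rel (split_high s t ls j)"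
  proof (cases "j = length ls")
    case True
    have "fst (ls ! (length ls - 1)) \<in> Arr" using is_string_arrow[OF st, of "length ls - 1"] j
      by simp
    then have "ltgt s t (ls ! (length ls - 1)) \<in> V" using E[of "fst (ls ! (length ls - 1))"]
      by (auto simp: ltgt_def)
    moreover have "last ls = ls ! (length ls - 1)" using j by (intro last_conv_nth) auto
    ultimately show ?thesis using True j by (simp add: split_high_def is_string_Triv)
  next
    case False then show ?thesis using is_string_drop[OF st, of j] j by (simp add: split_high_def)
  qed
qed

lemma letters_split_low: "1 \<le> j \<Longrightarrow> letters (split_low s t ls j) = take (j - 1) ls"
  by (simp add: split_low_def)

lemma letters_split_high: "j \<le> length ls \<Longrightarrow> letters (split_high s t ls j) = drop j ls"
  by (simp add: split_high_def)

lemma raw_concat_len: "raw_concat V Arr s t Rel x u v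
    \<Longrightarrow> length (letters x) = length (letters u) + 1 + length (letters v)"
  unfolding raw_concat_def by auto

lemma raw_concat_strings: "raw_concat V Arr s t Rel x u v \<Longrightarrow>
    is_string V Arr s t Rel x \<and> is_string V Arr s t Rel u \<and> is_string V Arr s t Rel v"
  unfolding raw_concat_def by auto

lemma raw_concat_split:
  assumes E: "\<And>a. a \<in> Arr \<Longrightarrow> s a \<in> V \<and> t a \<in> V" and st: "is_string V Arr s t Rel (Word ls)"
    and j: "1 \<le> j" "j \<le> length ls"
  shows "raw_concat V Arr s t Rel (Word ls) (split_low s t ls j) (split_high s t ls j)"
  unfolding raw_concat_def
proof (intro conjI exI[of _ "ls ! (j - 1)"])
  show "is_string V Arr s t Rel (Word ls)" by (rule st)
  show "is_string V Arr s t Rel (split_low s t ls j)"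
      "is_string V Arr s t Rel (split_high s t ls j)"
    using is_string_splits[OF E st j] by auto
  show "fst (ls ! (j - 1)) \<in> Arr" using is_string_arrow[OF st] j by simp
  show "lsrc s t (ls ! (j - 1)) = str_tgt s t (split_low s t ls j)"
  proof (cases "j = 1")
    case True then show ?thesis by (simp add: split_low_def)
  next
    case False
    then have tn: "take (j - 1) ls \<noteq> []" "length (take (j - 1) ls) = j - 1" using j by auto
    then have "last (take (j - 1) ls) = take (j - 1) ls ! (j - 2)"
      by (simp add: last_conv_nth numeral_2_eq_2)
    also have "\<dots> = ls ! (j - 2)" using j False by (simp add: numeral_2_eq_2)
    finally have "last (take (j - 1) ls) = ls ! (j - 2)" .
    moreover have "Suc (j - 2) = j - 1" using False j by simp
    ultimately show ?thesis using False is_string_adjacent[OF st, of "j - 2"] j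
      by (simp add: split_low_def)
  qed
  show "ltgt s t (ls ! (j - 1)) = str_src s t (split_high s t ls j)"
  proof (cases "j = length ls")
    case True
    have "ls \<noteq> []" using j by auto
    then show ?thesis using True by (simp add: split_high_def last_conv_nth)
  next
    case False
    then have "hd (drop j ls) = ls ! j" using j by (simp add: hd_drop_conv_nth)
    then show ?thesis using False is_string_adjacent[OF st, of "j - 1"] j
      by (simp add: split_high_def)
  qed
  show "Word ls
      = Word (letters (split_low s t ls j) @ [ls ! (j - 1)] @ letters (split_high s t ls j))"
  proof -
    have "ls = take (j - 1) ls @ ls ! (j - 1) # drop (Suc (j - 1)) ls"
      by (rule id_take_nth_drop) (use j in simp)
    moreover have "Suc (j - 1) = j" using j by simp
    ultimately show ?thesis using j by (simp add: letters_split_low letters_split_high)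
  qed
qed

lemma raw_concat_split_string:
  assumes E: "\<And>a. a \<in> Arr \<Longrightarrow> s a \<in> V \<and> t a \<in> V" and sx: "is_string V Arr s t Rel x"
    and j: "1 \<le> j" "j \<le> length (letters x)"
  shows "raw_concat V Arr s t Rel x (split_low s t (letters x) j) (split_high s t (letters x) j)"
proof (cases x)
  case (Word ls)
  have "raw_concat V Arr s t Rel (Word ls) (split_low s t ls j) (split_high s t ls j)"
    by (rule raw_concat_split) (use E sx j Word in auto)
  then show ?thesis using Word by simp
qed (use j in simp)

lemma split_raw_concat:
  assumes rc: "raw_concat V Arr s t Rel x u v"
  shows "1 \<le> Suc (length (letters u)) \<and> Suc (length (letters u)) \<le> length (letters x) \<and>
    split_low s t (letters x) (Suc (length (letters u))) = u \<and>
    split_high s t (letters x) (Suc (length (letters u))) = v"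
proof -
  obtain l where l: "fst l \<in> Arr" "lsrc s t l = str_tgt s t u" "ltgt s t l = str_src s t v"
    "x = Word (letters u @ [l] @ letters v)" and su: "is_string V Arr s t Rel u"
      and sv: "is_string V Arr s t Rel v"
    using rc unfolding raw_concat_def by blast
  let ?j = "Suc (length (letters u))"
  have lx: "letters x = letters u @ [l] @ letters v" using l by simp
  have low: "split_low s t (letters x) ?j = u"
  proof (cases "letters u = []")
    case True
    then obtain v0 where "u = Triv v0" using letters_Nil_Triv[OF su] by blast
    then show ?thesis using True l lx by (simp add: split_low_def)
  next
    case False
    then show ?thesis using Word_letters[OF su False] lx by (simp add: split_low_def)
  qed
  have high: "split_high s t (letters x) ?j = v"
  proof (cases "letters v = []")
    case True
    then obtain v0 where "v = Triv v0" using letters_Nil_Triv[OF sv] by blast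
    then show ?thesis using True l lx by (simp add: split_high_def)
  next
    case False
    then show ?thesis using Word_letters[OF sv False] lx by (simp add: split_high_def)
  qed
  show ?thesis using low high lx by simp
qed

lemma raw_concat_breaks: "raw_concat V Arr s t Rel x u v
    \<Longrightarrow> (str_class v, str_class u) \<in> breaks s t x"
proof -
  assume rc: "raw_concat V Arr s t Rel x u v"
  let ?j = "Suc (length (letters u))"
  have h: "1 \<le> ?j \<and> ?j \<le> length (letters x) \<and> split_low s t (letters x) ?j = u
      \<and> split_high s t (letters x) ?j = v"
    by (rule split_raw_concat[OF rc])
  show ?thesis unfolding breaks_def
  proof (rule CollectI, rule exI[of _ ?j])
    show "(str_class v, str_class u)
        = (str_class (split_high s t (letters x) ?j), str_class (split_low s t (letters x) ?j)) \<and>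
      1 \<le> ?j \<and> ?j \<le> length (letters x)" using h by simp
  qed
qed

lemma raw_concat_inv_str:
  assumes rc: "raw_concat V Arr s t Rel x u v"
  shows "raw_concat V Arr s t Rel (inv_str x) (inv_str v) (inv_str u)"
proof -
  obtain l where l: "fst l \<in> Arr" "lsrc s t l = str_tgt s t u" "ltgt s t l = str_src s t v"
    "x = Word (letters u @ [l] @ letters v)" and su: "is_string V Arr s t Rel u"
      and sv: "is_string V Arr s t Rel v"
    and sx: "is_string V Arr s t Rel x"
    using rc unfolding raw_concat_def by blast
  show ?thesis unfolding raw_concat_def
  proof (intro conjI exI[of _ "inv_letter l"])
    show "is_string V Arr s t Rel (inv_str x)" by (rule is_string_inv_str[OF sx])
    show "is_string V Arr s t Rel (inv_str v)" by (rule is_string_inv_str[OF sv])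
    show "is_string V Arr s t Rel (inv_str u)" by (rule is_string_inv_str[OF su])
    show "fst (inv_letter l) \<in> Arr" using l by simp
    show "lsrc s t (inv_letter l) = str_tgt s t (inv_str v)" using l str_tgt_inv[OF sv] by simp
    show "ltgt s t (inv_letter l) = str_src s t (inv_str u)" using l str_src_inv[OF su] by simp
    show "inv_str x = Word (letters (inv_str v) @ [inv_letter l] @ letters (inv_str u))"
      using l by (simp add: inv_letter_case_prod letters_inv_str)
  qed
qed

lemma split_inv_str:
  assumes j: "1 \<le> j" "j \<le> length ls"
  shows "split_low s t (rev (map inv_letter ls)) (Suc (length ls) - j)
      = inv_str (split_high s t ls j)"
    and "split_high s t (rev (map inv_letter ls)) (Suc (length ls) - j)
        = inv_str (split_low s t ls j)"
proof -
  have ne: "ls \<noteq> []" using j by auto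
  show "split_low s t (rev (map inv_letter ls)) (Suc (length ls) - j)
      = inv_str (split_high s t ls j)"
  proof (cases "j = length ls")
    case True
    then show ?thesis using ne
      by (simp add: split_low_def split_high_def hd_conv_nth[symmetric] hd_rev last_map)
  next
    case False
    have "take (length ls - j) (rev (map inv_letter ls)) = rev (map inv_letter (drop j ls))"
      using j by (simp add: take_rev drop_map)
    then show ?thesis using False j by (simp add: split_low_def split_high_def inv_letter_case_prod)
  qed
  show "split_high s t (rev (map inv_letter ls)) (Suc (length ls) - j)
      = inv_str (split_low s t ls j)"
  proof (cases "j = 1")
    case True
    then show ?thesis using ne
      by (simp add: split_low_def split_high_def last_rev hd_map hd_conv_nth)
  next
    case False
    have "drop (Suc (length ls) - j) (rev (map inv_letter ls))
        = rev (map inv_letter (take (j - 1) ls))"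
      using j by (simp add: drop_rev take_map)
    then show ?thesis using False j by (simp add: split_low_def split_high_def inv_letter_case_prod)
  qed
qed

lemma raw_concat_split_left:
  assumes E: "\<And>a. a \<in> Arr \<Longrightarrow> s a \<in> V \<and> t a \<in> V"
    and rc: "raw_concat V Arr s t Rel x u v" and j: "1 \<le> j" "j \<le> length (letters u)"
  shows "split_low s t (letters x) j = split_low s t (letters u) j"
    and "raw_concat V Arr s t Rel (split_high s t (letters x) j) (split_high s t (letters u) j) v"
proof -
  obtain l where l: "fst l \<in> Arr" "lsrc s t l = str_tgt s t u" "ltgt s t l = str_src s t v"
    "x = Word (letters u @ [l] @ letters v)" and su: "is_string V Arr s t Rel u"
      and sv: "is_string V Arr s t Rel v"
    and sx: "is_string V Arr s t Rel x"
    using rc unfolding raw_concat_def by blast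
  have lx: "letters x = letters u @ [l] @ letters v" using l by simp
  have une: "letters u \<noteq> []" using j by auto
  have uW: "u = Word (letters u)" using Word_letters[OF su une] .
  show "split_low s t (letters x) j = split_low s t (letters u) j"
    using lx une j by (auto simp: split_low_def nth_append)
  have hx: "split_high s t (letters x) j = Word (drop j (letters u) @ [l] @ letters v)"
    using lx j by (simp add: split_high_def)
  show "raw_concat V Arr s t Rel (split_high s t (letters x) j) (split_high s t (letters u) j) v"
    unfolding raw_concat_def hx
  proof (intro conjI exI[of _ l])
    show "is_string V Arr s t Rel (Word (drop j (letters u) @ [l] @ letters v))"
      using is_string_drop[of V Arr s t Rel "letters x" j] sx l(4) lx j by simp
    show "is_string V Arr s t Rel (split_high s t (letters u) j)"
    proof -
      have sw: "is_string V Arr s t Rel (Word (letters u))" using su uW by simp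
      show ?thesis using is_string_splits[OF E sw j] by simp
    qed
    show "is_string V Arr s t Rel v" by (rule sv)
    show "fst l \<in> Arr" by (rule l(1))
    show "lsrc s t l = str_tgt s t (split_high s t (letters u) j)"
    proof -
      have tg: "str_tgt s t u = ltgt s t (last (letters u))" using uW by (metis str_tgt.simps(2))
      show ?thesis using l(2) tg une j by (auto simp: split_high_def last_drop)
    qed
    show "ltgt s t l = str_src s t v" by (rule l(3))
    show "Word (drop j (letters u) @ [l] @ letters v)
        = Word (letters (split_high s t (letters u) j) @ [l] @ letters v)"
      using j by (simp add: letters_split_high)
  qed
qed

definition str_len :: "('v, 'a) rawstr set \<Rightarrow> nat" where
  "str_len c = length (letters (SOME x. x \<in> c))"

lemma str_len_eq: "c \<in> Str V Arr s t Rel \<Longrightarrow> x \<in> c \<Longrightarrow> str_len c = length (letters x)"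
proof -
  assume c: "c \<in> Str V Arr s t Rel" and x: "x \<in> c"
  have cx: "c = str_class x" using Str_memD(1)[OF c x] .
  have "(SOME y. y \<in> c) \<in> c" using x by (rule someI)
  then have "(SOME y. y \<in> c) = x \<or> (SOME y. y \<in> c) = inv_str x" using cx
    by (auto simp: str_class_def)
  then show ?thesis unfolding str_len_def by (auto simp: length_letters_inv_str)
qed

lemma breaks_props:
  assumes E: "\<And>a. a \<in> Arr \<Longrightarrow> s a \<in> V \<and> t a \<in> V"
    and c: "c \<in> Str V Arr s t Rel" and x: "x \<in> c" and pq: "(p, q) \<in> breaks s t x"
  shows "p \<in> Str V Arr s t Rel \<and> q \<in> Str V Arr s t Rel \<and> is_concat V Arr s t Rel c q p \<and>
    str_len p < str_len c \<and> str_len q < str_len c"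
proof -
  obtain j where j: "1 \<le> j" "j \<le> length (letters x)"
    and p: "p = str_class (split_high s t (letters x) j)"
    and q: "q = str_class (split_low s t (letters x) j)"
    using pq unfolding breaks_def by blast
  have sx: "is_string V Arr s t Rel x" using Str_memD(2)[OF c x] .
  have rc: "raw_concat V Arr s t Rel x (split_low s t (letters x) j) (split_high s t (letters x) j)"
    by (rule raw_concat_split_string[OF E sx j])
  have pS: "p \<in> Str V Arr s t Rel" and qS: "q \<in> Str V Arr s t Rel"
    using raw_concat_strings[OF rc] p q Str_memI by auto
  have ic: "is_concat V Arr s t Rel c q p" unfolding is_concat_def p q
    using x rc str_class_self by blast
  have lens: "length (letters x) =
      length (letters (split_low s t (letters x) j)) + 1
          + length (letters (split_high s t (letters x) j))"
    by (rule raw_concat_len[OF rc])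
  have hp: "split_high s t (letters x) j \<in> p" using p by (simp add: str_class_self)
  have hq: "split_low s t (letters x) j \<in> q" using q by (simp add: str_class_self)
  have "str_len p = length (letters (split_high s t (letters x) j))" by (rule str_len_eq[OF pS hp])
  moreover have "str_len q = length (letters (split_low s t (letters x) j))"
    by (rule str_len_eq[OF qS hq])
  moreover have "str_len c = length (letters x)" using str_len_eq[OF c x] .
  ultimately show ?thesis using pS qS ic lens by simp
qed

lemma is_concat_str_len:
  assumes "c \<in> Str V Arr s t Rel" "a \<in> Str V Arr s t Rel" "b \<in> Str V Arr s t Rel"
    and "is_concat V Arr s t Rel c a b"
  shows "str_len c = str_len a + 1 + str_len b"
  using assms str_len_eq raw_concat_len unfolding is_concat_def by metis

lemma is_concat_representatives:
  assumes c: "c \<in> Str V Arr s t Rel" and a: "a \<in> Str V Arr s t Rel" and b: "b \<in> Str V Arr s t Rel"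
    and conc: "is_concat V Arr s t Rel c a b" and x: "x \<in> c"
  shows "\<exists>u v. raw_concat V Arr s t Rel x u v \<and> ((u \<in> a \<and> v \<in> b) \<or> (u \<in> b \<and> v \<in> a))"
proof -
  obtain x0 u v where x0: "x0 \<in> c" and rc: "raw_concat V Arr s t Rel x0 u v" and uv: "u \<in> a" "v \<in> b"
    using conc unfolding is_concat_def by blast
  have "x = x0 \<or> x = inv_str x0" using x Str_memD(1)[OF c x0] by (auto simp: str_class_def)
  then show ?thesis
  proof
    assume "x = inv_str x0"
    moreover note Str_inv_str_mem[OF b uv(2)] Str_inv_str_mem[OF a uv(1)]
    ultimately show ?thesis using raw_concat_inv_str[OF rc] by blast
  qed (use rc uv in blast)
qed

lemma str_closedD:
  "str_closed V Arr s t Rel X \<Longrightarrow> a \<in> X \<Longrightarrow> b \<in> X \<Longrightarrow> c \<in> Str V Arr s t Rel \<Longrightarrow>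
    is_concat V Arr s t Rel c a b \<Longrightarrow> c \<in> X"
  unfolding str_closed_def by blast

lemma brick_gentle_bound_quiver:
  "brick_gentle TYPE('k::field) V Arr s t Rel \<Longrightarrow> bound_quiver V Arr s t Rel"
  by (simp add: brick_gentle_def gentle_def)

lemma brick_gentle_ends:
  assumes "brick_gentle TYPE('k::field) V Arr s t Rel" and "a \<in> Arr"
  shows "s a \<in> V \<and> t a \<in> V"
  using brick_gentle_bound_quiver[OF assms(1)] assms(2) by (simp add: bound_quiver_def)

lemma brick_gentle_Rel:
  assumes "brick_gentle TYPE('k::field) V Arr s t Rel" and "(al, be) \<in> Rel"
  shows "al \<in> Arr \<and> be \<in> Arr \<and> t be = s al"
  using brick_gentle_bound_quiver[OF assms(1)] assms(2)
  by (auto simp: bound_quiver_def composable_def)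

lemma brick_gentle_finite_Arr: "brick_gentle TYPE('k::field) V Arr s t Rel \<Longrightarrow> finite Arr"
  by (drule brick_gentle_bound_quiver) (simp add: bound_quiver_def)

lemma brick_gentle_endo_division:
  "brick_gentle TYPE('k::field) V Arr s t Rel \<Longrightarrow> is_rep V Arr s t Rel d (M :: 'a \<Rightarrow> 'k mat) \<Longrightarrow>
    indecomposable_rep V Arr s t d M \<Longrightarrow> endo_division V Arr s t d M"
  by (simp add: brick_gentle_def)

section \<open>String modules\<close>

definition opt_coeff :: "nat option \<Rightarrow> (nat \<Rightarrow> 'k::zero) \<Rightarrow> 'k" where
  "opt_coeff ox g = (case ox of None \<Rightarrow> 0 | Some x \<Rightarrow> g x)"

lemma opt_coeff_simps[simp]: "opt_coeff None g = 0" "opt_coeff (Some x) g = g x"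
  by (auto simp: opt_coeff_def)

text \<open>Walks are compared lexicographically, letter by letter, with a direct letter below the end
  of the walk and the end of the walk below an inverse letter.\<close>

definition letter_key :: "('a \<times> bool) option \<Rightarrow> nat" where
  "letter_key ox = (case ox of None \<Rightarrow> 1 | Some c \<Rightarrow> (if snd c then 2 else 0))"

definition lex_less :: "(nat \<Rightarrow> ('a \<times> bool) option) \<Rightarrow> (nat \<Rightarrow> ('a \<times> bool) option) \<Rightarrow> bool" where
  "lex_less h h' \<longleftrightarrow> (\<exists>m. (\<forall>m'<m. h m' = h' m') \<and> letter_key (h m) > letter_key (h' m))"

definition lex_le :: "(nat \<Rightarrow> ('a \<times> bool) option) \<Rightarrow> (nat \<Rightarrow> ('a \<times> bool) option) \<Rightarrow> bool" where
  "lex_le h h' \<longleftrightarrow> h = h' \<or> lex_less h h'"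

lemma lex_less_irrefl: "\<not> lex_less h h"
  by (auto simp: lex_less_def)

lemma lex_less_trans: assumes "lex_less h1 h2" "lex_less h2 h3" shows "lex_less h1 h3"
proof -
  obtain m1 where m1: "\<forall>m'<m1. h1 m' = h2 m'" "letter_key (h1 m1) > letter_key (h2 m1)"
    using assms(1) by (auto simp: lex_less_def)
  obtain m2 where m2: "\<forall>m'<m2. h2 m' = h3 m'" "letter_key (h2 m2) > letter_key (h3 m2)"
    using assms(2) by (auto simp: lex_less_def)
  consider "m1 < m2" | "m2 < m1" | "m1 = m2" by linarith
  then show ?thesis
  proof cases
    case 1 then show ?thesis using m1 m2 unfolding lex_less_def by (intro exI[of _ m1]) auto
  next
    case 2 then show ?thesis using m1 m2 unfolding lex_less_def by (intro exI[of _ m2]) auto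
  next
    case 3 then show ?thesis using m1 m2 unfolding lex_less_def by (intro exI[of _ m1]) auto
  qed
qed

lemma lex_le_trans: "lex_le h1 h2 \<Longrightarrow> lex_le h2 h3 \<Longrightarrow> lex_le h1 h3"
  unfolding lex_le_def using lex_less_trans by blast

lemma lex_le_less_trans: "lex_le h1 h2 \<Longrightarrow> lex_less h2 h3 \<Longrightarrow> lex_less h1 h3"
  unfolding lex_le_def using lex_less_trans by blast

lemma lex_less_le_trans: "lex_less h1 h2 \<Longrightarrow> lex_le h2 h3 \<Longrightarrow> lex_less h1 h3"
  unfolding lex_le_def using lex_less_trans by blast

lemma lex_le_antisym: "lex_le h1 h2 \<Longrightarrow> lex_le h2 h1 \<Longrightarrow> h1 = h2"
  unfolding lex_le_def using lex_less_trans lex_less_irrefl by blast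

lemma index_mult_mat_sum:
  assumes "A \<in> carrier_mat nr m" "B \<in> carrier_mat m nc" "i < nr" "j < nc"
  shows "(A * B) $$ (i, j) = (\<Sum>r\<in>{0..<m}. A $$ (i, r) * B $$ (r, j))"
  using assms by (simp add: scalar_prod_def)

lemma square_zero_not_invertible:
  fixes A B :: "'k::field mat"
  assumes A: "A \<in> carrier_mat n n" and B: "B \<in> carrier_mat n n"
    and sq: "A * A = 0\<^sub>m n n" and inv: "A * B = 1\<^sub>m n"
  shows "A = 0\<^sub>m n n"
proof -
  have "A = A * 1\<^sub>m n" using A by simp
  also have "\<dots> = A * (A * B)" by (simp only: inv)
  also have "\<dots> = (A * A) * B" using A B by (simp add: assoc_mult_mat)
  also have "\<dots> = 0\<^sub>m n n" using B by (simp add: sq)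
  finally show ?thesis .
qed

text \<open>The string module of the string with letters ls (in order of application): its basis
  vectors are the positions 0, ..., length ls, position i lying at vertex vtx i. walk i True reads
  the letters to the right of position i, walk i False the inverses of those to its left, and the
  arrow a sends position i to act a i, the neighbouring position across a letter (a, True).\<close>

locale string_word =
  fixes V :: "'v set" and Arr :: "'a set" and s t :: "'a \<Rightarrow> 'v" and Rel :: "('a \<times> 'a) set"
    and ls :: "('a \<times> bool) list"
  assumes ends: "\<And>a. a \<in> Arr \<Longrightarrow> s a \<in> V \<and> t a \<in> V"
    and str: "is_string V Arr s t Rel (Word ls)"
begin

lemma letters_ne: "ls \<noteq> []" and letter_arrow: "i < length ls \<Longrightarrow> fst (ls ! i) \<in> Arr"
  and adjacent: "Suc i < length ls \<Longrightarrow> letters_adjacent s t Rel (ls ! i) (ls ! Suc i)"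
  using str by (auto simp: is_string_Word successively_conv_nth)

lemma adjacent_src: "Suc i < length ls \<Longrightarrow> lsrc s t (ls ! Suc i) = ltgt s t (ls ! i)"
  and adjacent_no_backtrack: "Suc i < length ls \<Longrightarrow> ls ! Suc i \<noteq> inv_letter (ls ! i)"
  using adjacent unfolding letters_adjacent_def by auto

definition walk :: "nat \<Rightarrow> bool \<Rightarrow> nat \<Rightarrow> ('a \<times> bool) option" where
  "walk i dr m = (if dr then (if i + m < length ls then Some (ls ! (i + m)) else None)
                 else (if m < i then Some (inv_letter (ls ! (i - m - 1))) else None))"

definition nxt :: "nat \<Rightarrow> bool \<Rightarrow> nat" where
  "nxt i dr = (if dr then Suc i else i - 1)"

definition pos_after :: "nat \<Rightarrow> bool \<Rightarrow> nat \<Rightarrow> nat" where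
  "pos_after i dr m = (if dr then i + m else i - m)"

definition vtx :: "nat \<Rightarrow> 'v" where
  "vtx i = (if i < length ls then lsrc s t (ls ! i) else ltgt s t (ls ! (length ls - 1)))"

lemma vtx_prev: "0 < i \<Longrightarrow> i \<le> length ls \<Longrightarrow> vtx i = ltgt s t (ls ! (i - 1))"
  using adjacent_src[of "i - 1"] by (cases "i < length ls") (auto simp: vtx_def)

lemma walk_vtx: "i \<le> length ls \<Longrightarrow> walk i dr 0 = Some c \<Longrightarrow> vtx i = lsrc s t c"
proof (cases dr)
  case True
  then show "walk i dr 0 = Some c \<Longrightarrow> ?thesis" by (auto simp: walk_def vtx_def split: if_splits)
next
  case False
  then show "i \<le> length ls \<Longrightarrow> walk i dr 0 = Some c \<Longrightarrow> ?thesis"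
    using vtx_prev[of i] by (auto simp: walk_def split: if_splits)
qed

lemma walk_nxt: "i \<le> length ls \<Longrightarrow> walk i dr 0 = Some c \<Longrightarrow> nxt i dr \<le> length ls
    \<and> vtx (nxt i dr) = ltgt s t c"
proof (cases dr)
  case True
  then show "walk i dr 0 = Some c \<Longrightarrow> ?thesis" using vtx_prev[of "Suc i"]
    by (auto simp: walk_def nxt_def split: if_splits)
next
  case False
  then show "i \<le> length ls \<Longrightarrow> walk i dr 0 = Some c \<Longrightarrow> ?thesis"
    by (auto simp: walk_def nxt_def vtx_def split: if_splits)
qed

lemma walk_arrow: "i \<le> length ls \<Longrightarrow> walk i dr m = Some c \<Longrightarrow> fst c \<in> Arr"
  by (auto simp: walk_def letter_arrow split: if_splits)

lemma walk_no_backtrack: "i \<le> length ls \<Longrightarrow> walk i True 0 = Some c \<Longrightarrow> walk i False 0 \<noteq> Some c"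
  using adjacent_no_backtrack[of "i - 1"] by (auto simp: walk_def split: if_splits)

lemma walk_no_backtrack': "i \<le> length ls \<Longrightarrow> walk i dr 0 = Some c \<Longrightarrow> walk i (\<not> dr) 0 \<noteq> Some c"
  using walk_no_backtrack[of i c] by (cases dr) auto

lemma walk_back: "i \<le> length ls \<Longrightarrow> walk i dr 0 = Some c
    \<Longrightarrow> walk (nxt i dr) (\<not> dr) 0 = Some (inv_letter c)"
  by (auto simp: walk_def nxt_def split: if_splits)

lemma nxt_back: "walk i dr 0 = Some c \<Longrightarrow> nxt (nxt i dr) (\<not> dr) = i"
  by (auto simp: walk_def nxt_def split: if_splits)

lemma walk_Suc: "walk i dr (Suc m) = walk (nxt i dr) dr m"
  by (auto simp: walk_def nxt_def)

lemma walk_pos_after: "walk (pos_after i dr m) dr 0 = walk i dr m"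
  by (auto simp: walk_def pos_after_def)

lemma pos_after_0[simp]: "pos_after i dr 0 = i"
  by (auto simp: pos_after_def nxt_def)

lemma walk_None_mono: "walk i dr m = None \<Longrightarrow> m \<le> m' \<Longrightarrow> walk i dr m' = None"
  by (auto simp: walk_def split: if_splits)

definition act :: "'a \<Rightarrow> nat \<Rightarrow> nat option" where
  "act a i = (if walk i True 0 = Some (a, True) then Some (Suc i)
             else if walk i False 0 = Some (a, True) then Some (i - 1) else None)"

definition act_inv :: "'a \<Rightarrow> nat \<Rightarrow> nat option" where
  "act_inv a i = (if walk i True 0 = Some (a, False) then Some (Suc i)
             else if walk i False 0 = Some (a, False) then Some (i - 1) else None)"

lemma act_iff:
  "i \<le> length ls \<Longrightarrow> act a i = Some k \<longleftrightarrow> (\<exists>dr. walk i dr 0 = Some (a, True) \<and> k = nxt i dr)"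
  using walk_no_backtrack[of i "(a, True)"] unfolding act_def nxt_def
  by (auto split: if_splits)

lemma act_inv_iff:
  "i \<le> length ls \<Longrightarrow> act_inv a i = Some k \<longleftrightarrow> (\<exists>dr. walk i dr 0 = Some (a, False) \<and> k = nxt i dr)"
  using walk_no_backtrack[of i "(a, False)"] unfolding act_inv_def nxt_def
  by (auto split: if_splits)

lemma act_props: "i \<le> length ls \<Longrightarrow> act a i = Some k \<Longrightarrow> k \<le> length ls \<and> vtx i = s a \<and> vtx k = t a
    \<and> a \<in> Arr"
  using walk_nxt walk_vtx walk_arrow by (fastforce simp: act_iff lsrc_def ltgt_def)

lemma act_inv_props: "k \<le> length ls \<Longrightarrow> act_inv a k = Some j \<Longrightarrow> j \<le> length ls \<and> vtx j = s a
    \<and> vtx k = t a \<and> a \<in> Arr"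
  using walk_nxt walk_vtx walk_arrow by (fastforce simp: act_inv_iff lsrc_def ltgt_def)

lemma act_act_inv: "i \<le> length ls \<Longrightarrow> act a i = Some k \<Longrightarrow> act_inv a k = Some i"
proof -
  assume i: "i \<le> length ls" and m: "act a i = Some k"
  then obtain dr where dr: "walk i dr 0 = Some (a, True)" "k = nxt i dr" by (auto simp: act_iff)
  have "k \<le> length ls" using walk_nxt[OF i dr(1)] dr by simp
  moreover have "walk k (\<not> dr) 0 = Some (a, False)" using walk_back[OF i dr(1)] dr
    by (simp add: inv_letter_def)
  moreover have "nxt k (\<not> dr) = i" using nxt_back[OF dr(1)] dr by simp
  ultimately show ?thesis by (auto simp: act_inv_iff)
qed

lemma act_inv_act: "k \<le> length ls \<Longrightarrow> act_inv a k = Some i \<Longrightarrow> act a i = Some k"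
proof -
  assume i: "k \<le> length ls" and m: "act_inv a k = Some i"
  then obtain dr where dr: "walk k dr 0 = Some (a, False)" "i = nxt k dr"
    by (auto simp: act_inv_iff)
  have "i \<le> length ls" using walk_nxt[OF i dr(1)] dr by simp
  moreover have "walk i (\<not> dr) 0 = Some (a, True)" using walk_back[OF i dr(1)] dr
    by (simp add: inv_letter_def)
  moreover have "nxt i (\<not> dr) = k" using nxt_back[OF dr(1)] dr by simp
  ultimately show ?thesis by (auto simp: act_iff)
qed

lemma no_relation_path:
  assumes i: "i \<le> length ls" and m1: "act be i = Some j" and m2: "act al j = Some k"
    and r: "(al, be) \<in> Rel"
  shows False
proof -
  obtain dr where dr: "walk i dr 0 = Some (be, True)" "j = nxt i dr" using m1 i
    by (auto simp: act_iff)
  have j: "j \<le> length ls" using walk_nxt[OF i dr(1)] dr by simp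
  obtain dr' where dr': "walk j dr' 0 = Some (al, True)" "k = nxt j dr'" using m2 j
    by (auto simp: act_iff)
  have "walk j (\<not> dr) 0 = Some (be, False)" using walk_back[OF i dr(1)] dr
    by (simp add: inv_letter_def)
  then have "dr' = dr" using dr' by (cases dr; cases dr') auto
  show False
  proof (cases dr)
    case True
    then have "ls ! i = (be, True)" "ls ! Suc i = (al, True)" "Suc i < length ls"
      using dr dr' \<open>dr' = dr\<close> by (auto simp: walk_def nxt_def split: if_splits)
    then show False using adjacent[of i] r unfolding letters_adjacent_def by auto
  next
    case False
    then have "ls ! (i - 1) = (be, False)" "ls ! (i - 2) = (al, False)" "1 < i"
      using dr dr' \<open>dr' = dr\<close>
      by (auto simp: walk_def nxt_def inv_letter_def prod_eq_iff numeral_2_eq_2 split: if_splits)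
    moreover have "Suc (i - 2) = i - 1" using \<open>1 < i\<close> by simp
    moreover have "Suc (i - 2) < length ls" using \<open>1 < i\<close> i by simp
    ultimately show False using adjacent[of "i - 2"] r unfolding letters_adjacent_def by auto
  qed
qed

definition fibre :: "'v \<Rightarrow> nat set" where
  "fibre v = {i. i \<le> length ls \<and> vtx i = v}"

lemma finite_fibre[simp]: "finite (fibre v)"
  by (simp add: fibre_def)

text \<open>F j i is the coefficient of basis vector j in the image of basis vector i; only pairs
  in a common fibre matter.\<close>

definition endo_coeffs :: "(nat \<Rightarrow> nat \<Rightarrow> 'k::zero) \<Rightarrow> bool" where
  "endo_coeffs F \<longleftrightarrow> (\<forall>a i k. a \<in> Arr \<longrightarrow> i \<le> length ls \<longrightarrow> k \<le> length ls \<longrightarrow> vtx i = s a \<longrightarrow> vtx k = t a \<longrightarrow>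
      opt_coeff (act a i) (F k) = opt_coeff (act_inv a k) (\<lambda>j. F j i))"

definition pos_less :: "nat \<Rightarrow> nat \<Rightarrow> bool" where
  "pos_less i j \<longleftrightarrow> (\<exists>dl. lex_le (walk i dl) (walk j True) \<and> lex_le (walk i (\<not> dl)) (walk j False) \<and>
      (lex_less (walk i dl) (walk j True) \<or> lex_less (walk i (\<not> dl)) (walk j False)))"

lemma pos_less_irrefl: "\<not> pos_less i i"
proof
  assume "pos_less i i"
  then obtain dl where dl: "lex_le (walk i dl) (walk i True)"
      "lex_le (walk i (\<not> dl)) (walk i False)"
    "lex_less (walk i dl) (walk i True) \<or> lex_less (walk i (\<not> dl)) (walk i False)"
    by (auto simp: pos_less_def)
  show False
  proof (cases dl)
    case True then show False using dl lex_less_irrefl by auto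
  next
    case False
    then have "walk i False = walk i True" using dl lex_le_antisym by auto
    then show False using dl False lex_less_irrefl by auto
  qed
qed

lemma pos_less_trans: assumes "pos_less i j" "pos_less j k" shows "pos_less i k"
proof -
  obtain d1 where d1: "lex_le (walk i d1) (walk j True)" "lex_le (walk i (\<not> d1)) (walk j False)"
    "lex_less (walk i d1) (walk j True) \<or> lex_less (walk i (\<not> d1)) (walk j False)" using assms(1)
    by (auto simp: pos_less_def)
  obtain d2 where d2: "lex_le (walk j d2) (walk k True)" "lex_le (walk j (\<not> d2)) (walk k False)"
    "lex_less (walk j d2) (walk k True) \<or> lex_less (walk j (\<not> d2)) (walk k False)" using assms(2)
    by (auto simp: pos_less_def)
  show ?thesis
  proof (cases d2)
    case True
    then have a: "lex_le (walk j True) (walk k True)" "lex_le (walk j False) (walk k False)"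
      "lex_less (walk j True) (walk k True) \<or> lex_less (walk j False) (walk k False)" using d2
      by auto
    have "lex_le (walk i d1) (walk k True)" using d1(1) a(1) by (rule lex_le_trans)
    moreover have "lex_le (walk i (\<not> d1)) (walk k False)" using d1(2) a(2) by (rule lex_le_trans)
    moreover have "lex_less (walk i d1) (walk k True) \<or> lex_less (walk i (\<not> d1)) (walk k False)"
      using d1 a lex_le_less_trans lex_less_le_trans by blast
    ultimately show ?thesis unfolding pos_less_def by blast
  next
    case False
    then have a: "lex_le (walk j False) (walk k True)" "lex_le (walk j True) (walk k False)"
      "lex_less (walk j False) (walk k True) \<or> lex_less (walk j True) (walk k False)" using d2
      by auto
    have "lex_le (walk i (\<not> d1)) (walk k True)" using d1(2) a(1) by (rule lex_le_trans)
    moreover have "lex_le (walk i (\<not> \<not> d1)) (walk k False)" using d1(1) a(2)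
      by (simp add: lex_le_trans)
    moreover have "lex_less (walk i (\<not> d1)) (walk k True)
        \<or> lex_less (walk i (\<not> \<not> d1)) (walk k False)"
      using d1 a lex_le_less_trans lex_less_le_trans by auto
    ultimately show ?thesis unfolding pos_less_def by blast
  qed
qed

lemma coeff_transport_direct:
  assumes hom: "endo_coeffs F" and i: "i \<le> length ls" and j: "j \<le> length ls"
    and pij: "vtx i = vtx j"
    and F: "F j i \<noteq> 0" and y: "walk j dr 0 = Some (a, True)"
  shows "\<exists>dr'. walk i dr' 0 = Some (a, True) \<and> F (nxt j dr) (nxt i dr') = F j i"
proof -
  have mj: "act a j = Some (nxt j dr)" using y j by (auto simp: act_iff)
  have k: "nxt j dr \<le> length ls" "vtx j = s a" "vtx (nxt j dr) = t a" "a \<in> Arr"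
    using act_props[OF j mj] by auto
  have mi: "act_inv a (nxt j dr) = Some j" using act_act_inv[OF j mj] .
  have "opt_coeff (act a i) (F (nxt j dr)) = opt_coeff (act_inv a (nxt j dr)) (\<lambda>j'. F j' i)"
    using hom k i pij unfolding endo_coeffs_def by auto
  then have eq: "opt_coeff (act a i) (F (nxt j dr)) = F j i" using mi by simp
  then obtain i' where i': "act a i = Some i'" using F by (cases "act a i") auto
  then obtain dr' where "walk i dr' 0 = Some (a, True)" "i' = nxt i dr'" using i
    by (auto simp: act_iff)
  then show ?thesis using eq i' by auto
qed

lemma coeff_transport_inverse:
  assumes hom: "endo_coeffs F" and i: "i \<le> length ls" and j: "j \<le> length ls"
    and pij: "vtx i = vtx j"
    and F: "F j i \<noteq> 0" and x: "walk i dr 0 = Some (a, False)"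
  shows "\<exists>dr'. walk j dr' 0 = Some (a, False) \<and> F (nxt j dr') (nxt i dr) = F j i"
proof -
  have mi: "act_inv a i = Some (nxt i dr)" using x i by (auto simp: act_inv_iff)
  have k: "nxt i dr \<le> length ls" "vtx (nxt i dr) = s a" "vtx i = t a" "a \<in> Arr"
    using act_inv_props[OF i mi] by auto
  have mj: "act a (nxt i dr) = Some i" using act_inv_act[OF i mi] .
  have "opt_coeff (act a (nxt i dr)) (F j) = opt_coeff (act_inv a j) (\<lambda>j'. F j' (nxt i dr))"
    using hom k j pij unfolding endo_coeffs_def by auto
  then have eq: "opt_coeff (act_inv a j) (\<lambda>j'. F j' (nxt i dr)) = F j i" using mj by simp
  then obtain j' where j': "act_inv a j = Some j'" using F by (cases "act_inv a j") auto
  then obtain dr' where "walk j dr' 0 = Some (a, False)" "j' = nxt j dr'" using j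
    by (auto simp: act_inv_iff)
  then show ?thesis using eq j' by auto
qed

definition aligned :: "nat \<Rightarrow> bool \<Rightarrow> nat \<Rightarrow> bool \<Rightarrow> bool" where
  "aligned i di j dj \<longleftrightarrow> (\<forall>c. walk j dj 0 = Some c \<longrightarrow> walk i (\<not> di) 0 \<noteq> Some c) \<and>
                        (\<forall>c. walk i di 0 = Some c \<longrightarrow> walk j (\<not> dj) 0 \<noteq> Some c)"

lemma coeff_step:
  assumes hom: "endo_coeffs F" and i: "i \<le> length ls" and j: "j \<le> length ls"
    and pij: "vtx i = vtx j"
    and F: "F j i \<noteq> 0" and C: "aligned i di j dj"
  shows "(walk i di 0 = walk j dj 0 \<and> (walk i di 0 \<noteq> None \<longrightarrow> F (nxt j dj) (nxt i di) = F j i))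
         \<or> letter_key (walk i di 0) > letter_key (walk j dj 0)"
proof -
  consider (yd) a where "walk j dj 0 = Some (a, True)" | (xi) a where
      "walk i di 0 = Some (a, False)"
    | (oth) "\<forall>a. walk j dj 0 \<noteq> Some (a, True)" "\<forall>a. walk i di 0 \<noteq> Some (a, False)" by blast
  then show ?thesis
  proof cases
    case yd
    obtain dr' where dr': "walk i dr' 0 = Some (a, True)" "F (nxt j dj) (nxt i dr') = F j i"
      using coeff_transport_direct[OF hom i j pij F yd] by blast
    have "dr' = di" using C yd dr' unfolding aligned_def by (cases dr'; cases di) auto
    then show ?thesis using dr' yd by auto
  next
    case xi
    obtain dr' where dr': "walk j dr' 0 = Some (a, False)" "F (nxt j dr') (nxt i di) = F j i"
      using coeff_transport_inverse[OF hom i j pij F xi] by blast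
    have "dr' = dj" using C xi dr' unfolding aligned_def by (cases dr'; cases dj) auto
    then show ?thesis using dr' xi by auto
  next
    case oth
    show ?thesis
    proof (cases "walk i di 0 = None \<and> walk j dj 0 = None")
      case True then show ?thesis by auto
    next
      case False
      have "letter_key (walk i di 0) \<ge> 1" using oth(2)
          by (cases "walk i di 0") (auto simp: letter_key_def)
      moreover have "letter_key (walk j dj 0) \<le> 1" using oth(1)
          by (cases "walk j dj 0") (auto simp: letter_key_def)
      moreover have "letter_key (walk i di 0) \<noteq> 1 \<or> letter_key (walk j dj 0) \<noteq> 1" using False oth
        by (cases "walk i di 0"; cases "walk j dj 0") (auto simp: letter_key_def split: if_splits)
      ultimately show ?thesis by auto
    qed
  qed
qed

lemma coeff_step_next:
  assumes hom: "endo_coeffs F" and i: "i \<le> length ls" and j: "j \<le> length ls"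
    and pij: "vtx i = vtx j"
    and F: "F j i \<noteq> 0" and C: "aligned i di j dj" and eq: "walk i di 0 = walk j dj 0"
    and nn: "walk i di 0 = Some c"
  shows "nxt i di \<le> length ls \<and> nxt j dj \<le> length ls \<and> vtx (nxt i di) = vtx (nxt j dj) \<and>
         F (nxt j dj) (nxt i di) \<noteq> 0 \<and> aligned (nxt i di) di (nxt j dj) dj"
proof -
  have nj: "walk j dj 0 = Some c" using eq nn by simp
  have Fe: "F (nxt j dj) (nxt i di) = F j i" using coeff_step[OF hom i j pij F C] nn nj by simp
  have a: "nxt i di \<le> length ls" "vtx (nxt i di) = ltgt s t c" using walk_nxt[OF i nn] by auto
  have b: "nxt j dj \<le> length ls" "vtx (nxt j dj) = ltgt s t c" using walk_nxt[OF j nj] by auto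
  have bi: "walk (nxt i di) (\<not> di) 0 = Some (inv_letter c)" using walk_back[OF i nn] .
  have bj: "walk (nxt j dj) (\<not> dj) 0 = Some (inv_letter c)" using walk_back[OF j nj] .
  have "aligned (nxt i di) di (nxt j dj) dj"
    unfolding aligned_def
  proof (intro conjI allI impI)
    fix c' assume "walk (nxt j dj) dj 0 = Some c'"
    then show "walk (nxt i di) (\<not> di) 0 \<noteq> Some c'" using walk_no_backtrack'[OF b(1), of dj c'] bi bj
      by auto
  next
    fix c' assume "walk (nxt i di) di 0 = Some c'"
    then show "walk (nxt j dj) (\<not> dj) 0 \<noteq> Some c'" using walk_no_backtrack'[OF a(1), of di c'] bi bj
      by auto
  qed
  then show ?thesis using a b Fe F by auto
qed

lemma pos_after_shift: "pos_after i dr (Suc m) = pos_after (nxt i dr) dr m"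
  by (auto simp: pos_after_def nxt_def)

lemma coeff_walk:
  assumes hom: "endo_coeffs F"
  shows "\<And>i j. i \<le> length ls \<Longrightarrow> j \<le> length ls \<Longrightarrow> vtx i = vtx j \<Longrightarrow> F j i \<noteq> 0 \<Longrightarrow> aligned i di j dj \<Longrightarrow>
    (\<forall>m'<m. walk i di m' = walk j dj m' \<and> walk i di m' \<noteq> None) \<Longrightarrow>
    pos_after i di m \<le> length ls \<and> pos_after j dj m \<le> length ls
        \<and> vtx (pos_after i di m) = vtx (pos_after j dj m) \<and>
    F (pos_after j dj m) (pos_after i di m) \<noteq> 0
        \<and> aligned (pos_after i di m) di (pos_after j dj m) dj"
proof (induction m)
  case 0 then show ?case by simp
next
  case (Suc m)
  have "walk i di 0 \<noteq> None" using Suc.prems(6) by blast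
  then obtain c where c: "walk i di 0 = Some c" by blast
  have e: "walk i di 0 = walk j dj 0" using Suc.prems(6) by auto
  note nx = coeff_step_next[OF hom Suc.prems(1-5) e c]
  have hm: "\<forall>m'<m. walk (nxt i di) di m' = walk (nxt j dj) dj m' \<and> walk (nxt i di) di m' \<noteq> None"
  proof (intro allI impI)
    fix m' assume "m' < m"
    then have "Suc m' < Suc m" by simp
    then have "walk i di (Suc m') = walk j dj (Suc m') \<and> walk i di (Suc m') \<noteq> None"
      using Suc.prems(6) by blast
    then show "walk (nxt i di) di m' = walk (nxt j dj) dj m' \<and> walk (nxt i di) di m' \<noteq> None"
      unfolding walk_Suc by (elim conjE) (intro conjI; assumption)
  qed
  have "pos_after (nxt i di) di m \<le> length ls \<and> pos_after (nxt j dj) dj m \<le> length ls \<and>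
    vtx (pos_after (nxt i di) di m) = vtx (pos_after (nxt j dj) dj m) \<and>
    F (pos_after (nxt j dj) dj m) (pos_after (nxt i di) di m) \<noteq> 0
        \<and> aligned (pos_after (nxt i di) di m) di (pos_after (nxt j dj) dj m) dj"
    using Suc.IH[of "nxt i di" "nxt j dj"] nx hm by blast
  then show ?case unfolding pos_after_shift .
qed

lemma coeff_nonzero_lex_le:
  assumes hom: "endo_coeffs F" and i: "i \<le> length ls" and j: "j \<le> length ls"
    and pij: "vtx i = vtx j"
    and F: "F j i \<noteq> 0" and C: "aligned i di j dj"
  shows "lex_le (walk i di) (walk j dj)"
proof (cases "walk i di = walk j dj")
  case True then show ?thesis by (simp add: lex_le_def)
next
  case False
  then have "\<exists>m. walk i di m \<noteq> walk j dj m" by auto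
  then obtain m where m: "walk i di m \<noteq> walk j dj m" "\<forall>m'<m. walk i di m' = walk j dj m'"
    using exists_least_iff[of "\<lambda>m. walk i di m \<noteq> walk j dj m"] by auto
  have nn: "\<forall>m'<m. walk i di m' = walk j dj m' \<and> walk i di m' \<noteq> None"
  proof (intro allI impI conjI)
    fix m' assume "m' < m"
    then show "walk i di m' = walk j dj m'" using m by auto
    show "walk i di m' \<noteq> None"
    proof
      assume "walk i di m' = None"
      then have "walk i di m = None" "walk j dj m = None"
        using walk_None_mono \<open>m' < m\<close> m(2) by (metis less_imp_le)+
      then show False using m(1) by simp
    qed
  qed
  note w = coeff_walk[OF hom i j pij F C nn]
  have "letter_key (walk (pos_after i di m) di 0) > letter_key (walk (pos_after j dj m) dj 0)"
    using coeff_step[OF hom, of "pos_after i di m" "pos_after j dj m" di dj] w m(1)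
    by (auto simp: walk_pos_after)
  then show ?thesis using m(2) unfolding lex_le_def lex_less_def by (auto simp: walk_pos_after)
qed

lemma backward_walk_inj: "i \<le> length ls \<Longrightarrow> j \<le> length ls \<Longrightarrow> walk i False = walk j False \<Longrightarrow> i = j"
proof (rule ccontr)
  assume a: "walk i False = walk j False" "i \<noteq> j"
  show False
  proof (cases "i < j")
    case True
    have "walk i False i = walk j False i" using a by simp
    then show False using True by (simp add: walk_def)
  next
    case False
    have "walk i False j = walk j False j" using a by simp
    moreover have "j < i" using False a(2) by simp
    ultimately show False by (simp add: walk_def)
  qed
qed

lemma forward_walk_neq_backward:
  assumes i: "i \<le> length ls" and j: "j \<le> length ls" and e: "walk i True = walk j False"
    and lt: "i < j"
  shows False
proof -
  define r where "r = (j - i) div 2"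
  have r: "j - i = 2 * r + 1 \<or> (j - i = 2 * r \<and> r \<ge> 1)"
    using lt unfolding r_def by presburger
  have er: "walk i True r = walk j False r" using e by simp
  show False
  proof (cases "j - i = 2 * r + 1")
    case True
    have "i + r < length ls" "r < j" "j - r - 1 = i + r" using True j lt by auto
    then have "ls ! (i + r) = inv_letter (ls ! (i + r))" using er by (simp add: walk_def)
    then show False by simp
  next
    case False
    then have r2: "j - i = 2 * r" "r \<ge> 1" using r by auto
    have "i + r < length ls" "r < j" "j - r - 1 = i + r - 1" using r2 j lt by auto
    then have "ls ! Suc (i + r - 1) = inv_letter (ls ! (i + r - 1))" using er r2
      by (simp add: walk_def)
    then show False using adjacent_no_backtrack[of "i + r - 1"] \<open>i + r < length ls\<close> r2 by simp
  qed
qed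

lemma coeff_nonzero_pos_less:
  assumes hom: "endo_coeffs F" and i: "i \<le> length ls" and j: "j \<le> length ls"
    and pij: "vtx i = vtx j"
    and F: "F j i \<noteq> 0" and ne: "i \<noteq> j"
  shows "pos_less i j"
proof -
  define OK where "OK dl \<longleftrightarrow> (\<forall>c. walk j True 0 = Some c \<longrightarrow> walk i (\<not> dl) 0 \<noteq> Some c) \<and>
                        (\<forall>c. walk i dl 0 = Some c \<longrightarrow> walk j False 0 \<noteq> Some c)" for dl
  have "OK True \<or> OK False"
  proof (rule ccontr)
    assume "\<not> (OK True \<or> OK False)"
    then obtain c1 c2 where c1: "(walk j True 0 = Some c1 \<and> walk i False 0 = Some c1)
        \<or> (walk i True 0 = Some c1 \<and> walk j False 0 = Some c1)"
      and c2: "(walk j True 0 = Some c2 \<and> walk i True 0 = Some c2)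
          \<or> (walk i False 0 = Some c2 \<and> walk j False 0 = Some c2)"
      unfolding OK_def by auto
    show False using c1 c2 walk_no_backtrack[OF i] walk_no_backtrack[OF j] by metis
  qed
  then obtain dl where dl: "OK dl" by blast
  have C1: "aligned i dl j True" using dl unfolding OK_def aligned_def by auto
  have C2: "aligned i (\<not> dl) j False" using dl unfolding OK_def aligned_def by auto
  have h1: "lex_le (walk i dl) (walk j True)" using coeff_nonzero_lex_le[OF hom i j pij F C1] .
  have h2: "lex_le (walk i (\<not> dl)) (walk j False)" using coeff_nonzero_lex_le[OF hom i j pij F C2] .
  have "lex_less (walk i dl) (walk j True) \<or> lex_less (walk i (\<not> dl)) (walk j False)"
  proof (rule ccontr)
    assume "\<not> ?thesis"
    then have e1: "walk i dl = walk j True" and e2: "walk i (\<not> dl) = walk j False" using h1 h2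
      by (auto simp: lex_le_def)
    show False
    proof (cases dl)
      case True then show False using backward_walk_inj[OF i j] e2 ne by auto
    next
      case False
      then have "walk i True = walk j False" "walk j True = walk i False" using e1 e2 by auto
      then show False using forward_walk_neq_backward[OF i j] forward_walk_neq_backward[OF j i] ne
        by (metis linorder_neqE_nat)
    qed
  qed
  then show ?thesis using h1 h2 unfolding pos_less_def by blast
qed

lemma endo_coeffs_diag_Suc:
  assumes hom: "endo_coeffs F" and i: "i < length ls"
  shows "F (Suc i) (Suc i) = F i i"
proof -
  obtain a b where ab: "ls ! i = (a, b)" by (cases "ls ! i")
  have aA: "a \<in> Arr" using letter_arrow[OF i] ab by simp
  show ?thesis
  proof (cases b)
    case True
    have s0: "walk i True 0 = Some (a, True)" using i ab True by (simp add: walk_def)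
    have m: "act a i = Some (Suc i)" using s0 by (simp add: act_def)
    have mi: "act_inv a (Suc i) = Some i" using act_act_inv[OF _ m] i by simp
    have pp: "vtx i = s a" "vtx (Suc i) = t a" using act_props[OF _ m] i by auto
    have "opt_coeff (act a i) (F (Suc i)) = opt_coeff (act_inv a (Suc i)) (\<lambda>j. F j i)"
      using hom aA pp i unfolding endo_coeffs_def by auto
    then show ?thesis using m mi by simp
  next
    case False
    have s0: "walk i True 0 = Some (a, False)" using i ab False by (simp add: walk_def)
    have m: "act_inv a i = Some (Suc i)" using s0 by (simp add: act_inv_def)
    have mi: "act a (Suc i) = Some i" using act_inv_act[OF _ m] i by simp
    have pp: "vtx (Suc i) = s a" "vtx i = t a" using act_inv_props[OF _ m] i by auto
    have "opt_coeff (act a (Suc i)) (F i) = opt_coeff (act_inv a i) (\<lambda>j. F j (Suc i))"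
      using hom aA pp i unfolding endo_coeffs_def by auto
    then show ?thesis using m mi by simp
  qed
qed

lemma endo_coeffs_diag_const: "endo_coeffs F \<Longrightarrow> i \<le> length ls \<Longrightarrow> F i i = F 0 0"
proof (induction i)
  case 0 then show ?case by simp
next
  case (Suc i) then show ?case using endo_coeffs_diag_Suc[of F i] by simp
qed

lemma wf_pos_less: "wf {(j, i). i \<le> length ls \<and> j \<le> length ls \<and> pos_less i j}"
proof (rule finite_acyclic_wf)
  let ?R = "{(j, i). i \<le> length ls \<and> j \<le> length ls \<and> pos_less i j}"
  show "finite ?R" by (rule finite_subset[of _ "{..length ls} \<times> {..length ls}"]) auto
  have "trans ?R" unfolding trans_def using pos_less_trans by blast
  then have "?R\<^sup>+ = ?R" by (rule trancl_id)
  then show "acyclic ?R" unfolding acyclic_def using pos_less_irrefl by auto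
qed

definition idempotent_coeffs :: "(nat \<Rightarrow> nat \<Rightarrow> 'k::field) \<Rightarrow> bool" where
  "idempotent_coeffs F \<longleftrightarrow> (\<forall>i k. i \<le> length ls \<longrightarrow> k \<le> length ls \<longrightarrow> vtx k = vtx i \<longrightarrow>
     F k i = (\<Sum>j\<in>fibre (vtx i). F k j * F j i))"

definition triangular_coeffs :: "(nat \<Rightarrow> nat \<Rightarrow> 'k::zero) \<Rightarrow> bool" where
  "triangular_coeffs F \<longleftrightarrow> (\<forall>i j. i \<le> length ls \<longrightarrow> j \<le> length ls \<longrightarrow> vtx i = vtx j \<longrightarrow>
     F j i \<noteq> 0 \<longrightarrow> i \<noteq> j \<longrightarrow> pos_less i j)"

lemma triangular_endo_coeffs: "endo_coeffs F \<Longrightarrow> triangular_coeffs F"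
  unfolding triangular_coeffs_def using coeff_nonzero_pos_less by blast

lemma idempotent_triangular_coeffs_zero:
  fixes H :: "nat \<Rightarrow> nat \<Rightarrow> 'k::field"
  assumes idem: "idempotent_coeffs H" and tri: "triangular_coeffs H"
    and diag: "\<forall>i\<le>length ls. H i i = 0"
  shows "i \<le> length ls \<Longrightarrow> k \<le> length ls \<Longrightarrow> vtx k = vtx i \<Longrightarrow> H k i = 0"
proof (induction i arbitrary: k rule: wf_induct_rule[OF wf_pos_less])
  case (1 i)
  have "H k i = (\<Sum>j\<in>fibre (vtx i). H k j * H j i)" using idem 1 unfolding idempotent_coeffs_def
    by blast
  also have "\<dots> = (\<Sum>j\<in>fibre (vtx i). 0)"
  proof (rule sum.cong[OF refl])
    fix j assume "j \<in> fibre (vtx i)"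
    then have j: "j \<le> length ls" "vtx j = vtx i" by (auto simp: fibre_def)
    show "H k j * H j i = 0"
    proof (cases "H j i = 0 \<or> j = i")
      case False
      then have "pos_less i j" using tri 1 j unfolding triangular_coeffs_def by auto
      then have "H k j = 0" using 1 j by auto
      then show ?thesis by simp
    qed (use diag 1 in auto)
  qed
  finally show ?case by simp
qed

lemma idempotent_coeffs_compl:
  fixes F :: "nat \<Rightarrow> nat \<Rightarrow> 'k::field"
  assumes idem: "idempotent_coeffs F"
  shows "idempotent_coeffs (\<lambda>k i. (if k = i then 1 else 0) - F k i)"
  unfolding idempotent_coeffs_def
proof (intro allI impI)
  fix i k assume ik: "i \<le> length ls" "k \<le> length ls" "vtx k = vtx i"
  let ?P = "fibre (vtx i)"
  have kP: "k \<in> ?P" and iP: "i \<in> ?P" using ik by (auto simp: fibre_def)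
  have FF: "(\<Sum>j\<in>?P. F k j * F j i) = F k i" using idem ik unfolding idempotent_coeffs_def by simp
  have e: "((if k = j then 1 else 0) - F k j) * ((if j = i then 1 else 0) - F j i) =
      (if j = k then (if k = i then 1 else 0) else 0) - (if j = k then F k i else 0)
      - (if j = i then F k i else 0) + F k j * F j i" for j
    by (auto simp: algebra_simps)
  have "(\<Sum>j\<in>?P. ((if k = j then 1 else 0) - F k j) * ((if j = i then 1 else 0) - F j i)) =
      (\<Sum>j\<in>?P. (if j = k then (if k = i then 1 else 0) else 0))
      - (\<Sum>j\<in>?P. (if j = k then F k i else 0)) - (\<Sum>j\<in>?P. (if j = i then F k i else 0))
      + (\<Sum>j\<in>?P. F k j * F j i)"
    unfolding e by (simp add: sum_subtractf sum.distrib)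
  also have "\<dots> = (if k = i then 1 else 0) - F k i - F k i + F k i"
    using kP iP by (simp only: FF sum.delta if_True finite_fibre)
  finally show "(if k = i then 1 else 0) - F k i =
      (\<Sum>j\<in>?P. ((if k = j then 1 else 0) - F k j) * ((if j = i then 1 else 0) - F j i))"
    by simp
qed

lemma idempotent_coeffs_diag:
  fixes F :: "nat \<Rightarrow> nat \<Rightarrow> 'k::field"
  assumes idem: "idempotent_coeffs F" and tri: "triangular_coeffs F" and i: "i \<le> length ls"
  shows "F i i * F i i = F i i"
proof -
  have "F i i = (\<Sum>j\<in>fibre (vtx i). F i j * F j i)" using idem i unfolding idempotent_coeffs_def
    by blast
  also have "\<dots> = (\<Sum>j\<in>fibre (vtx i). if j = i then F i i * F i i else 0)"
  proof (rule sum.cong[OF refl])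
    fix j assume "j \<in> fibre (vtx i)"
    then have j: "j \<le> length ls" "vtx j = vtx i" by (auto simp: fibre_def)
    have "F i j = 0 \<or> F j i = 0" if "j \<noteq> i"
    proof (rule ccontr)
      assume "\<not> (F i j = 0 \<or> F j i = 0)"
      then have "pos_less i j" "pos_less j i" using tri i j that unfolding triangular_coeffs_def
        by auto
      then show False using pos_less_trans pos_less_irrefl by blast
    qed
    then show "F i j * F j i = (if j = i then F i i * F i i else 0)" by auto
  qed
  also have "\<dots> = F i i * F i i" using i by (simp add: sum.delta fibre_def)
  finally show ?thesis by simp
qed

lemma idempotent_endo_coeffs:
  fixes F :: "nat \<Rightarrow> nat \<Rightarrow> 'k::field"
  assumes hom: "endo_coeffs F" and idem: "idempotent_coeffs F"
  shows "(\<forall>i k. i \<le> length ls \<longrightarrow> k \<le> length ls \<longrightarrow> vtx k = vtx i \<longrightarrow> F k i = 0) \<or>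
         (\<forall>i k. i \<le> length ls \<longrightarrow> k \<le> length ls \<longrightarrow> vtx k = vtx i \<longrightarrow> F k i = (if k = i then 1 else 0))"
proof -
  note tri = triangular_endo_coeffs[OF hom]
  define c where "c = F 0 0"
  have diag: "\<forall>i\<le>length ls. F i i = c" unfolding c_def using endo_coeffs_diag_const[OF hom] by blast
  have "c * c = c" unfolding c_def by (rule idempotent_coeffs_diag[OF idem tri]) simp
  then have "c * (c - 1) = 0" by (simp add: right_diff_distrib)
  then consider "c = 0" | "c = 1" by auto
  then show ?thesis
  proof cases
    case 1
    then show ?thesis using idempotent_triangular_coeffs_zero[OF idem tri] diag by simp
  next
    case 2
    define G where "G k i = (if k = i then 1 else 0) - F k i" for k i
    have "idempotent_coeffs G" unfolding G_def by (rule idempotent_coeffs_compl[OF idem])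
    moreover have "triangular_coeffs G" using tri unfolding triangular_coeffs_def G_def by auto
    moreover have "\<forall>i\<le>length ls. G i i = 0" using diag 2 by (simp add: G_def)
    ultimately have "\<forall>i k. i \<le> length ls \<longrightarrow> k \<le> length ls \<longrightarrow> vtx k = vtx i \<longrightarrow> G k i = 0"
      using idempotent_triangular_coeffs_zero by blast
    then show ?thesis by (auto simp: G_def)
  qed
qed

lemma vtx_in_V: "i \<le> length ls \<Longrightarrow> vtx i \<in> V"
proof -
  assume i: "i \<le> length ls"
  have ne: "length ls > 0" using letters_ne by simp
  show ?thesis
  proof (cases "i < length ls")
    case True
    then show ?thesis using letter_arrow[OF True] ends by (auto simp: vtx_def lsrc_def)
  next
    case False
    then show ?thesis using letter_arrow[of "length ls - 1"] ends ne
      by (auto simp: vtx_def ltgt_def)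
  qed
qed

definition fibre_dim :: "'v \<Rightarrow> nat" where "fibre_dim v = card (fibre v)"

definition fibre_enum :: "'v \<Rightarrow> nat \<Rightarrow> nat" where
  "fibre_enum v = (SOME h. bij_betw h {0..<fibre_dim v} (fibre v))"

lemma fibre_enum_bij: "bij_betw (fibre_enum v) {0..<fibre_dim v} (fibre v)"
proof -
  have "\<exists>h. bij_betw h {0..<fibre_dim v} (fibre v)" unfolding fibre_dim_def
    by (rule ex_bij_betw_nat_finite) simp
  then show ?thesis unfolding fibre_enum_def by (rule someI_ex)
qed

definition fibre_idx :: "nat \<Rightarrow> nat" where
  "fibre_idx i = inv_into {0..<fibre_dim (vtx i)} (fibre_enum (vtx i)) i"

lemma fibre_idx: "i \<in> fibre v \<Longrightarrow> fibre_idx i < fibre_dim v \<and> fibre_enum v (fibre_idx i) = i"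
proof -
  assume i: "i \<in> fibre v"
  then have pv: "vtx i = v" by (simp add: fibre_def)
  have b: "bij_betw (fibre_enum v) {0..<fibre_dim v} (fibre v)" by (rule fibre_enum_bij)
  have "inv_into {0..<fibre_dim v} (fibre_enum v) i \<in> {0..<fibre_dim v}"
    using b i by (metis bij_betw_def inv_into_into)
  moreover have "fibre_enum v (inv_into {0..<fibre_dim v} (fibre_enum v) i) = i"
    using b i by (meson bij_betw_inv_into_right)
  ultimately show ?thesis unfolding fibre_idx_def pv by simp
qed

lemma fibre_enum: "r < fibre_dim v \<Longrightarrow> fibre_enum v r \<in> fibre v \<and> fibre_idx (fibre_enum v r) = r"
proof -
  assume r: "r < fibre_dim v"
  have b: "bij_betw (fibre_enum v) {0..<fibre_dim v} (fibre v)" by (rule fibre_enum_bij)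
  have e: "fibre_enum v r \<in> fibre v" using b r by (auto simp: bij_betw_def)
  then have "vtx (fibre_enum v r) = v" by (simp add: fibre_def)
  then have "fibre_idx (fibre_enum v r)
      = inv_into {0..<fibre_dim v} (fibre_enum v) (fibre_enum v r)" by (simp add: fibre_idx_def)
  also have "\<dots> = r" using b r by (simp add: bij_betw_def inv_into_f_f)
  finally show ?thesis using e by simp
qed

lemma fibre_enum_inj: "r < fibre_dim v \<Longrightarrow> r' < fibre_dim v
    \<Longrightarrow> fibre_enum v r = fibre_enum v r' \<longleftrightarrow> r = r'"
  using fibre_enum by metis

lemma sum_fibre_enum: "(\<Sum>r\<in>{0..<fibre_dim v}. g (fibre_enum v r)) = (\<Sum>j\<in>fibre v. g j)"
  by (rule sum.reindex_bij_betw[OF fibre_enum_bij])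

lemma sum_fibre_idx: "(\<Sum>r\<in>{0..<fibre_dim v}. h r) = (\<Sum>j\<in>fibre v. h (fibre_idx j))"
proof -
  have "(\<Sum>r\<in>{0..<fibre_dim v}. h r) = (\<Sum>r\<in>{0..<fibre_dim v}. h (fibre_idx (fibre_enum v r)))"
    by (rule sum.cong) (auto simp: fibre_enum)
  also have "\<dots> = (\<Sum>j\<in>fibre v. h (fibre_idx j))" by (rule sum_fibre_enum)
  finally show ?thesis .
qed

lemma index_mult_fibre:
  assumes "A \<in> carrier_mat (fibre_dim v) (fibre_dim v)"
      "B \<in> carrier_mat (fibre_dim v) (fibre_dim v)" "k \<in> fibre v" "i \<in> fibre v"
  shows "(A * B) $$ (fibre_idx k, fibre_idx i)
      = (\<Sum>j\<in>fibre v. A $$ (fibre_idx k, fibre_idx j) * B $$ (fibre_idx j, fibre_idx i))"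
proof -
  have "(A * B) $$ (fibre_idx k, fibre_idx i)
      = (\<Sum>r\<in>{0..<fibre_dim v}. A $$ (fibre_idx k, r) * B $$ (r, fibre_idx i))"
    using assms fibre_idx by (intro index_mult_mat_sum[OF assms(1,2)]) auto
  also have "\<dots> = (\<Sum>j\<in>fibre v. A $$ (fibre_idx k, fibre_idx j) * B $$ (fibre_idx j, fibre_idx i))"
    by (rule sum_fibre_idx)
  finally show ?thesis .
qed

definition string_rep :: "'a \<Rightarrow> 'k::field mat" where
  "string_rep a = mat (fibre_dim (t a)) (fibre_dim (s a)) (\<lambda>(r, c). if act a (fibre_enum (s a) c) =
      Some (fibre_enum (t a) r) then 1 else 0)"

lemma string_rep_carrier: "string_rep a \<in> carrier_mat (fibre_dim (t a)) (fibre_dim (s a))"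
  by (simp add: string_rep_def)

lemma string_rep_entry: "k \<in> fibre (t a) \<Longrightarrow> i \<in> fibre (s a)
    \<Longrightarrow> string_rep a $$ (fibre_idx k, fibre_idx i) = (if act a i = Some k then 1 else 0)"
  using fibre_idx by (simp add: string_rep_def)

lemma index_endo_mult_rep:
  fixes f :: "'v \<Rightarrow> 'k::field mat"
  assumes f: "f (t a) \<in> carrier_mat (fibre_dim (t a)) (fibre_dim (t a))" and i: "i \<in> fibre (s a)"
      and k: "k \<in> fibre (t a)"
  shows "(f (t a) * string_rep a) $$ (fibre_idx k, fibre_idx i)
      = opt_coeff (act a i) (\<lambda>i'. f (t a) $$ (fibre_idx k, fibre_idx i'))"
proof -
  have "(f (t a) * string_rep a) $$ (fibre_idx k, fibre_idx i)
      = (\<Sum>r\<in>{0..<fibre_dim (t a)}. f (t a) $$ (fibre_idx k, r) * string_rep a $$ (r, fibre_idx i))"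
    using fibre_idx i k by (intro index_mult_mat_sum[OF f string_rep_carrier]) auto
  also have "\<dots> = (\<Sum>j\<in>fibre (t a). f (t a) $$ (fibre_idx k, fibre_idx j)
      * string_rep a $$ (fibre_idx j, fibre_idx i))"
    by (rule sum_fibre_idx)
  also have "\<dots> = (\<Sum>j\<in>fibre (t a). if j = the (act a i)
      \<and> act a i \<noteq> None then f (t a) $$ (fibre_idx k, fibre_idx j) else 0)"
    by (rule sum.cong[OF refl]) (auto simp: string_rep_entry i)
  also have "\<dots> = opt_coeff (act a i) (\<lambda>i'. f (t a) $$ (fibre_idx k, fibre_idx i'))"
  proof (cases "act a i")
    case None then show ?thesis by simp
  next
    case (Some i')
    have "i' \<in> fibre (t a)" using act_props[of i a i'] i Some by (auto simp: fibre_def)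
    then show ?thesis using Some by (simp add: sum.delta)
  qed
  finally show ?thesis .
qed

lemma index_rep_mult_endo:
  fixes f :: "'v \<Rightarrow> 'k::field mat"
  assumes f: "f (s a) \<in> carrier_mat (fibre_dim (s a)) (fibre_dim (s a))" and i: "i \<in> fibre (s a)"
      and k: "k \<in> fibre (t a)"
  shows "(string_rep a * f (s a)) $$ (fibre_idx k, fibre_idx i)
      = opt_coeff (act_inv a k) (\<lambda>j. f (s a) $$ (fibre_idx j, fibre_idx i))"
proof -
  have kn: "k \<le> length ls" using k by (simp add: fibre_def)
  have "(string_rep a * f (s a)) $$ (fibre_idx k, fibre_idx i)
      = (\<Sum>r\<in>{0..<fibre_dim (s a)}. string_rep a $$ (fibre_idx k, r) * f (s a) $$ (r, fibre_idx i))"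
    using fibre_idx i k by (intro index_mult_mat_sum[OF string_rep_carrier f]) auto
  also have "\<dots> = (\<Sum>j\<in>fibre (s a). string_rep a $$ (fibre_idx k, fibre_idx j)
      * f (s a) $$ (fibre_idx j, fibre_idx i))"
    by (rule sum_fibre_idx)
  also have "\<dots> = (\<Sum>j\<in>fibre (s a). if j = the (act_inv a k)
      \<and> act_inv a k \<noteq> None then f (s a) $$ (fibre_idx j, fibre_idx i) else 0)"
  proof (rule sum.cong[OF refl])
    fix j assume j: "j \<in> fibre (s a)"
    then have jn: "j \<le> length ls" by (simp add: fibre_def)
    have "act a j = Some k \<longleftrightarrow> act_inv a k = Some j" using act_act_inv[OF jn] act_inv_act[OF kn]
      by blast
    then show "string_rep a $$ (fibre_idx k, fibre_idx j) * f (s a) $$ (fibre_idx j, fibre_idx i) =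
      (if j = the (act_inv a k)
          \<and> act_inv a k \<noteq> None then f (s a) $$ (fibre_idx j, fibre_idx i) else 0)"
      using string_rep_entry[OF k j] by auto
  qed
  also have "\<dots> = opt_coeff (act_inv a k) (\<lambda>j. f (s a) $$ (fibre_idx j, fibre_idx i))"
  proof (cases "act_inv a k")
    case None then show ?thesis by simp
  next
    case (Some j)
    have "j \<in> fibre (s a)" using act_inv_props[OF kn Some] by (auto simp: fibre_def)
    then show ?thesis using Some by (simp add: sum.delta)
  qed
  finally show ?thesis .
qed

definition coeffs_of :: "('v \<Rightarrow> 'k::field mat) \<Rightarrow> nat \<Rightarrow> nat \<Rightarrow> 'k" where
  "coeffs_of f j i = (if vtx j = vtx i then f (vtx i) $$ (fibre_idx j, fibre_idx i) else 0)"

lemma endo_coeffs_coeffs_of: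
  fixes f :: "'v \<Rightarrow> 'k::field mat"
  assumes "is_endo V Arr s t fibre_dim string_rep f"
  shows "endo_coeffs (coeffs_of f)"
  unfolding endo_coeffs_def
proof (intro allI impI)
  fix a i k assume a: "a \<in> Arr" and i: "i \<le> length ls" and k: "k \<le> length ls" and pi: "vtx i = s a"
      and pk: "vtx k = t a"
  have iP: "i \<in> fibre (s a)" and kP: "k \<in> fibre (t a)" using i k pi pk by (auto simp: fibre_def)
  have V: "s a \<in> V" "t a \<in> V" using ends a by auto
  have cs: "f (s a) \<in> carrier_mat (fibre_dim (s a)) (fibre_dim (s a))"
    and ct: "f (t a) \<in> carrier_mat (fibre_dim (t a)) (fibre_dim (t a))"
    and eq: "f (t a) * string_rep a = string_rep a * f (s a)"
    using assms V a unfolding is_endo_def by auto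
  have L: "opt_coeff (act a i) (coeffs_of f k) =
      opt_coeff (act a i) (\<lambda>i'. f (t a) $$ (fibre_idx k, fibre_idx i'))"
  proof (cases "act a i")
    case (Some i')
    then have "vtx i' = t a" using act_props[OF i Some] by simp
    then show ?thesis using Some pk by (simp add: coeffs_of_def)
  qed simp
  have R: "opt_coeff (act_inv a k) (\<lambda>j. coeffs_of f j i)
      = opt_coeff (act_inv a k) (\<lambda>j. f (s a) $$ (fibre_idx j, fibre_idx i))"
  proof (cases "act_inv a k")
    case (Some j)
    then have "vtx j = s a" using act_inv_props[OF k Some] by simp
    then show ?thesis using Some pi by (simp add: coeffs_of_def)
  qed simp
  show "opt_coeff (act a i) (coeffs_of f k) = opt_coeff (act_inv a k) (\<lambda>j. coeffs_of f j i)"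
    unfolding L R using index_endo_mult_rep[where f=f
        and a=a, OF ct iP kP] index_rep_mult_endo[where f=f and a=a, OF cs iP kP] eq by simp
qed

definition endo_of :: "(nat \<Rightarrow> nat \<Rightarrow> 'k::field) \<Rightarrow> 'v \<Rightarrow> 'k mat" where
  "endo_of F v = mat (fibre_dim v) (fibre_dim v) (\<lambda>(r, c). F (fibre_enum v r) (fibre_enum v c))"

lemma endo_of_carrier: "endo_of F v \<in> carrier_mat (fibre_dim v) (fibre_dim v)"
  by (simp add: endo_of_def)

lemma endo_of_entry: "j \<in> fibre v \<Longrightarrow> i \<in> fibre v \<Longrightarrow> endo_of F v $$ (fibre_idx j, fibre_idx i) = F j i"
  using fibre_idx by (simp add: endo_of_def)

lemma endo_of_mult:
  "endo_of F v * endo_of G v = endo_of (\<lambda>k i. \<Sum>j\<in>fibre v. F k j * G j i) v"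
proof (rule eq_matI)
  fix r c assume "r < dim_row (endo_of (\<lambda>k i. \<Sum>j\<in>fibre v. F k j * G j i) v)"
    "c < dim_col (endo_of (\<lambda>k i. \<Sum>j\<in>fibre v. F k j * G j i) v)"
  then have r: "r < fibre_dim v" and c: "c < fibre_dim v" by (auto simp: endo_of_def)
  define k i where "k = fibre_enum v r" and "i = fibre_enum v c"
  have k: "k \<in> fibre v" "fibre_idx k = r" and i: "i \<in> fibre v" "fibre_idx i = c"
    using fibre_enum[OF r] fibre_enum[OF c] k_def i_def by auto
  have "(endo_of F v * endo_of G v) $$ (r, c) =
      (endo_of F v * endo_of G v) $$ (fibre_idx k, fibre_idx i)"
    using k i by simp
  also have "\<dots> = (\<Sum>j\<in>fibre v. endo_of F v $$ (fibre_idx k, fibre_idx j)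
      * endo_of G v $$ (fibre_idx j, fibre_idx i))"
    by (rule index_mult_fibre[OF endo_of_carrier endo_of_carrier k(1) i(1)])
  also have "\<dots> = (\<Sum>j\<in>fibre v. F k j * G j i)"
    by (rule sum.cong) (simp_all add: endo_of_entry k(1) i(1))
  also have "\<dots> = endo_of (\<lambda>k i. \<Sum>j\<in>fibre v. F k j * G j i) v $$ (r, c)"
    using r c by (simp add: endo_of_def k_def i_def)
  finally show "(endo_of F v * endo_of G v) $$ (r, c) = endo_of (\<lambda>k i. \<Sum>j\<in>fibre v. F k j * G j i) v
      $$ (r, c)" .
qed (auto simp: endo_of_def)

lemma index_endo_of_mult_rep:
  assumes kP: "k \<in> fibre (t a)" and iP: "i \<in> fibre (s a)"
  shows "(endo_of F (t a) * string_rep a) $$ (fibre_idx k, fibre_idx i) = opt_coeff (act a i) (F k)"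
proof -
  have "(endo_of F (t a) * string_rep a) $$ (fibre_idx k, fibre_idx i) =
      opt_coeff (act a i) (\<lambda>i'. endo_of F (t a) $$ (fibre_idx k, fibre_idx i'))"
    by (rule index_endo_mult_rep[where f="endo_of F" and a=a, OF endo_of_carrier iP kP])
  also have "\<dots> = opt_coeff (act a i) (F k)"
  proof (cases "act a i")
    case (Some i')
    then have "i' \<in> fibre (t a)" using act_props[of i a i'] iP by (simp add: fibre_def)
    then show ?thesis using Some endo_of_entry[OF kP] by simp
  qed simp
  finally show ?thesis .
qed

lemma index_rep_mult_endo_of:
  assumes kP: "k \<in> fibre (t a)" and iP: "i \<in> fibre (s a)"
  shows "(string_rep a * endo_of F (s a)) $$ (fibre_idx k, fibre_idx i) = opt_coeff (act_inv a k)
      (\<lambda>j. F j i)"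
proof -
  have "(string_rep a * endo_of F (s a)) $$ (fibre_idx k, fibre_idx i) =
      opt_coeff (act_inv a k) (\<lambda>j. endo_of F (s a) $$ (fibre_idx j, fibre_idx i))"
    by (rule index_rep_mult_endo[where f="endo_of F" and a=a, OF endo_of_carrier iP kP])
  also have "\<dots> = opt_coeff (act_inv a k) (\<lambda>j. F j i)"
  proof (cases "act_inv a k")
    case (Some j)
    then have "j \<in> fibre (s a)" using act_inv_props[of k a j] kP by (simp add: fibre_def)
    then show ?thesis using Some endo_of_entry[OF _ iP] by simp
  qed simp
  finally show ?thesis .
qed

lemma is_endo_endo_of:
  fixes F :: "nat \<Rightarrow> nat \<Rightarrow> 'k::field"
  assumes hom: "endo_coeffs F"
  shows "is_endo V Arr s t fibre_dim string_rep (endo_of F)"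
  unfolding is_endo_def
proof (intro conjI ballI)
  fix a assume a: "a \<in> Arr"
  show "endo_of F (t a) * string_rep a = (string_rep a :: 'k mat) * endo_of F (s a)"
  proof (rule eq_matI)
    fix r c assume "r < dim_row (string_rep a * endo_of F (s a))"
        "c < dim_col (string_rep a * endo_of F (s a))"
    then have r: "r < fibre_dim (t a)" and c: "c < fibre_dim (s a)"
      by (auto simp: endo_of_def string_rep_def)
    define k i where "k = fibre_enum (t a) r" and "i = fibre_enum (s a) c"
    have k: "k \<in> fibre (t a)" "fibre_idx k = r" and i: "i \<in> fibre (s a)" "fibre_idx i = c"
      using fibre_enum[OF r] fibre_enum[OF c] k_def i_def by auto
    then show "(endo_of F (t a) * string_rep a) $$ (r, c) = (string_rep a * endo_of F (s a)) $$ (r, c)"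
      using index_endo_of_mult_rep[OF k(1) i(1), where F = F]
        index_rep_mult_endo_of[OF k(1) i(1), where F = F] hom a
      unfolding endo_coeffs_def fibre_def by auto
  qed (simp_all add: endo_of_def string_rep_def)
qed (simp add: endo_of_carrier)

lemma is_rep_string_rep:
  assumes comp: "\<And>al be. (al, be) \<in> Rel \<Longrightarrow> al \<in> Arr \<and> be \<in> Arr \<and> t be = s al"
  shows "is_rep V Arr s t Rel fibre_dim (string_rep :: 'a \<Rightarrow> 'k::field mat)"
  unfolding is_rep_def
proof (intro conjI ballI)
  fix a assume "a \<in> Arr" then show
      "(string_rep a :: 'k mat) \<in> carrier_mat (fibre_dim (t a)) (fibre_dim (s a))"
    by (simp add: string_rep_carrier)
next
  fix x assume x: "x \<in> Rel"
  obtain al be where ab: "x = (al, be)" by (cases x)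
  have c: "t be = s al" using comp x ab by auto
  have "(string_rep al :: 'k mat) * string_rep be = 0\<^sub>m (fibre_dim (t al)) (fibre_dim (s be))"
  proof (rule eq_matI)
    fix r0 c0 assume r0: "r0 < dim_row (0\<^sub>m (fibre_dim (t al)) (fibre_dim (s be)) :: 'k mat)"
        and c0: "c0 < dim_col (0\<^sub>m (fibre_dim (t al)) (fibre_dim (s be)) :: 'k mat)"
    then have r0': "r0 < fibre_dim (t al)" and c0': "c0 < fibre_dim (s be)" by auto
    have cb: "(string_rep be :: 'k mat) \<in> carrier_mat (fibre_dim (s al)) (fibre_dim (s be))"
      using string_rep_carrier[of be] c by simp
    have "((string_rep al :: 'k mat) * string_rep be) $$ (r0, c0)
        = (\<Sum>r\<in>{0..<fibre_dim (s al)}. string_rep al $$ (r0, r) * string_rep be $$ (r, c0))"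
      by (rule index_mult_mat_sum[OF string_rep_carrier cb r0' c0'])
    also have "\<dots> = (\<Sum>r\<in>{0..<fibre_dim (s al)}. (0::'k))"
    proof (rule sum.cong[OF refl])
      fix r assume r: "r \<in> {0..<fibre_dim (s al)}"
      show "(string_rep al :: 'k mat) $$ (r0, r) * string_rep be $$ (r, c0) = 0"
      proof (rule ccontr)
        assume ne: "(string_rep al :: 'k mat) $$ (r0, r) * string_rep be $$ (r, c0) \<noteq> 0"
        have r': "r < fibre_dim (t be)" using r c by simp
        have m1: "act be (fibre_enum (s be) c0) = Some (fibre_enum (t be) r)"
          using ne r' c0' by (auto simp: string_rep_def split: if_splits)
        have m2: "act al (fibre_enum (s al) r) = Some (fibre_enum (t al) r0)"
          using ne r r0' by (auto simp: string_rep_def split: if_splits)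
        have i: "fibre_enum (s be) c0 \<le> length ls" using fibre_enum[OF c0'] by (simp add: fibre_def)
        show False using no_relation_path[OF i m1, of al] m2 c x ab by simp
      qed
    qed
    also have "\<dots> = 0\<^sub>m (fibre_dim (t al)) (fibre_dim (s be)) $$ (r0, c0)" using r0' c0' by simp
    finally show "((string_rep al :: 'k mat) * string_rep be) $$ (r0, c0) = 0\<^sub>m (fibre_dim (t al))
        (fibre_dim (s be)) $$ (r0, c0)" .
  qed (auto simp: string_rep_def)
  then show "case x of (al, be) \<Rightarrow> (string_rep al :: 'k mat) * string_rep be = 0\<^sub>m (fibre_dim (t al))
      (fibre_dim (s be))"
    using ab by simp
qed

lemma coeffs_of_entry:
  "r < fibre_dim v \<Longrightarrow> c < fibre_dim v
      \<Longrightarrow> f v $$ (r, c) = coeffs_of f (fibre_enum v r) (fibre_enum v c)"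
  using fibre_enum[of r v] fibre_enum[of c v] by (auto simp: coeffs_of_def fibre_def)

lemma endo_eq_endo_of:
  assumes car: "e v \<in> carrier_mat (fibre_dim v) (fibre_dim v)"
    and G: "\<forall>i k. i \<le> length ls \<longrightarrow> k \<le> length ls \<longrightarrow> vtx k = vtx i \<longrightarrow> coeffs_of e k i = G k i"
  shows "e v = endo_of G v"
proof (rule eq_matI)
  fix r c assume "r < dim_row (endo_of G v)" "c < dim_col (endo_of G v)"
  then have r: "r < fibre_dim v" and c: "c < fibre_dim v" by (auto simp: endo_of_def)
  have "fibre_enum v r \<in> fibre v" "fibre_enum v c \<in> fibre v" using fibre_enum r c by auto
  then have "coeffs_of e (fibre_enum v r) (fibre_enum v c) = G (fibre_enum v r) (fibre_enum v c)"
    using G by (auto simp: fibre_def)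
  then show "e v $$ (r, c) = endo_of G v $$ (r, c)" using coeffs_of_entry[OF r c, of e] r c
    by (simp add: endo_of_def)
qed (use car in \<open>auto simp: endo_of_def\<close>)

lemma endo_of_zero: "endo_of (\<lambda>_ _. 0) v = 0\<^sub>m (fibre_dim v) (fibre_dim v)"
  by (rule eq_matI) (auto simp: endo_of_def)

lemma endo_of_delta: "endo_of (\<lambda>k i. if k = i then 1 else 0) v = 1\<^sub>m (fibre_dim v)"
  by (rule eq_matI) (auto simp: endo_of_def fibre_enum_inj)

lemma idempotent_coeffs_of:
  assumes e: "is_endo V Arr s t fibre_dim string_rep e" and idem: "\<forall>v\<in>V. e v * e v = e v"
  shows "idempotent_coeffs (coeffs_of e)"
  unfolding idempotent_coeffs_def
proof (intro allI impI)
  fix i k assume ik: "i \<le> length ls" "k \<le> length ls" "vtx k = vtx i"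
  let ?v = "vtx i"
  have v: "?v \<in> V" using vtx_in_V ik by simp
  have car: "e ?v \<in> carrier_mat (fibre_dim ?v) (fibre_dim ?v)" using e v unfolding is_endo_def
    by auto
  have iP: "i \<in> fibre ?v" and kP: "k \<in> fibre ?v" using ik by (auto simp: fibre_def)
  have "coeffs_of e k i = (e ?v * e ?v) $$ (fibre_idx k, fibre_idx i)"
    using idem v ik by (simp add: coeffs_of_def)
  also have "\<dots>
      = (\<Sum>j\<in>fibre ?v. e ?v $$ (fibre_idx k, fibre_idx j) * e ?v $$ (fibre_idx j, fibre_idx i))"
    by (rule index_mult_fibre[OF car car kP iP])
  also have "\<dots> = (\<Sum>j\<in>fibre ?v. coeffs_of e k j * coeffs_of e j i)"
    by (rule sum.cong[OF refl]) (use ik in \<open>auto simp: coeffs_of_def fibre_def\<close>)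
  finally show "coeffs_of e k i = (\<Sum>j\<in>fibre (vtx i). coeffs_of e k j * coeffs_of e j i)" .
qed

lemma indecomposable_string_rep:
    "indecomposable_rep V Arr s t fibre_dim (string_rep :: 'a \<Rightarrow> 'k::field mat)"
  unfolding indecomposable_rep_def
proof (intro conjI allI impI)
  have "0 \<in> fibre (vtx 0)" by (simp add: fibre_def)
  then have "fibre_dim (vtx 0) > 0" unfolding fibre_dim_def by (auto simp: card_gt_0_iff)
  then show "\<exists>v\<in>V. 0 < fibre_dim v" using vtx_in_V[of 0] by auto
next
  fix e :: "'v \<Rightarrow> 'k mat"
  assume e: "is_endo V Arr s t fibre_dim string_rep e \<and> (\<forall>v\<in>V. e v * e v = e v)"
  then have car: "e v \<in> carrier_mat (fibre_dim v) (fibre_dim v)" if "v \<in> V" for v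
    using that unfolding is_endo_def by auto
  have "(\<forall>i k. i \<le> length ls \<longrightarrow> k \<le> length ls \<longrightarrow> vtx k = vtx i \<longrightarrow> coeffs_of e k i = 0) \<or>
      (\<forall>i k. i \<le> length ls \<longrightarrow> k \<le> length ls \<longrightarrow> vtx k = vtx i \<longrightarrow>
        coeffs_of e k i = (if k = i then 1 else 0))"
    using idempotent_endo_coeffs endo_coeffs_coeffs_of idempotent_coeffs_of e by blast
  then show "(\<forall>v\<in>V. e v = 0\<^sub>m (fibre_dim v) (fibre_dim v)) \<or> (\<forall>v\<in>V. e v = 1\<^sub>m (fibre_dim v))"
  proof (elim disjE)
    assume "\<forall>i k. i \<le> length ls \<longrightarrow> k \<le> length ls \<longrightarrow> vtx k = vtx i \<longrightarrow> coeffs_of e k i = 0"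
    then have "e v = endo_of (\<lambda>_ _. 0) v" if "v \<in> V" for v
      by (rule endo_eq_endo_of[where e = e, OF car[OF that]])
    then show ?thesis by (simp add: endo_of_zero)
  next
    assume "\<forall>i k. i \<le> length ls \<longrightarrow> k \<le> length ls \<longrightarrow> vtx k = vtx i \<longrightarrow>
      coeffs_of e k i = (if k = i then 1 else 0)"
    then have "e v = endo_of (\<lambda>k i. if k = i then 1 else 0) v" if "v \<in> V" for v
      by (rule endo_eq_endo_of[where e = e, OF car[OF that]])
    then show ?thesis by (simp add: endo_of_delta)
  qed
qed

end

section \<open>A self-concatenation is not a brick\<close>

text \<open>Position i of U corresponds to position twin i of W: the walks from both agree up to the
  orientation twin_dir as long as they stay inside U, which makes twin_coeffs an endomorphism.\<close>

locale self_concat_word = string_word V Arr s t Rel ls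
  for V :: "'v set" and Arr :: "'a set" and s t :: "'a \<Rightarrow> 'v" and Rel :: "('a \<times> 'a) set"
    and ls :: "('a \<times> bool) list" +
  fixes U :: "('a \<times> bool) list" and l :: "'a \<times> bool" and W :: "('a \<times> bool) list"
  assumes ls_eq: "ls = U @ [l] @ W" and l_direct: "snd l"
    and W_cases: "W = U \<or> W = rev (map inv_letter U)"
    and loop: "U = [] \<Longrightarrow> lsrc s t l = ltgt s t l"
begin

abbreviation "m \<equiv> length U"

lemma length_W: "length W = m" using W_cases by auto

lemma length_ls: "length ls = Suc (2 * m)" using length_W ls_eq by simp

lemma ls_nth: "q < length ls
    \<Longrightarrow> ls ! q = (if q < m then U ! q else if q = m then l else W ! (q - Suc m))"
  unfolding ls_eq by (auto simp: nth_append)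

lemma W_nth: "q < m \<Longrightarrow> W ! q = (if W = U then U ! q else inv_letter (U ! (m - Suc q)))"
  using W_cases by (auto simp: rev_nth)

definition twin :: "nat \<Rightarrow> nat" where
  "twin i = (if W = U then i + Suc m else Suc (2 * m) - i)"

definition twin_dir :: "bool \<Rightarrow> bool" where
  "twin_dir dr = (if W = U then dr else \<not> dr)"

lemma twin_same: "W = U \<Longrightarrow> twin i = i + Suc m" and twin_inv: "W \<noteq> U \<Longrightarrow> twin i = Suc (2 * m) - i"
  and twin_dir_same: "W = U \<Longrightarrow> twin_dir dr = dr" and twin_dir_inv: "W \<noteq> U \<Longrightarrow> twin_dir dr = (\<not> dr)"
  unfolding twin_def twin_dir_def by auto

lemma walk_fwd_U: "i < m \<Longrightarrow> walk i True 0 = Some (U ! i)"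
  using ls_nth[of i] length_ls by (simp add: walk_def)

lemma walk_bwd_U: "0 < i \<Longrightarrow> i \<le> m \<Longrightarrow> walk i False 0 = Some (inv_letter (U ! (i - 1)))"
proof -
  assume a: "0 < i" "i \<le> m"
  then have h: "i - 1 < m" by simp
  then have "ls ! (i - 1) = U ! (i - 1)" using ls_nth[of "i - 1"] length_ls by simp
  then show ?thesis using a by (simp add: walk_def)
qed

lemma walk_fwd_twin_same: "W = U \<Longrightarrow> i < m \<Longrightarrow> walk (i + Suc m) True 0 = Some (U ! i)"
  using ls_nth[of "i + Suc m"] length_ls W_nth[of i] by (simp add: walk_def)

lemma walk_bwd_twin_same: "W = U \<Longrightarrow> 0 < i \<Longrightarrow> i \<le> m
    \<Longrightarrow> walk (i + Suc m) False 0 = Some (inv_letter (U ! (i - 1)))"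
  using ls_nth[of "i + m"] length_ls W_nth[of "i - 1"] by (simp add: walk_def)

lemma walk_bwd_twin_inv: "W \<noteq> U \<Longrightarrow> i < m \<Longrightarrow> walk (Suc (2 * m) - i) False 0 = Some (U ! i)"
proof -
  assume a: "W \<noteq> U" "i < m"
  have "ls ! (2 * m - i) = W ! (m - Suc i)" using ls_nth[of "2 * m - i"] a length_ls by auto
  also have "\<dots> = inv_letter (U ! i)" using W_nth[of "m - Suc i"] a by auto
  finally have "ls ! (2 * m - i) = inv_letter (U ! i)" .
  moreover have "Suc (2 * m) - i - 0 - 1 = 2 * m - i" using a by simp
  ultimately show ?thesis using a by (simp add: walk_def)
qed

lemma walk_fwd_twin_inv: "W \<noteq> U \<Longrightarrow> 0 < i \<Longrightarrow> i \<le> m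
    \<Longrightarrow> walk (Suc (2 * m) - i) True 0 = Some (inv_letter (U ! (i - 1)))"
proof -
  assume a: "W \<noteq> U" "0 < i" "i \<le> m"
  have "ls ! (Suc (2 * m) - i) = W ! (m - i)" using ls_nth[of "Suc (2 * m) - i"] a length_ls by auto
  also have "\<dots> = inv_letter (U ! (i - 1))" using W_nth[of "m - i"] a by auto
  finally show ?thesis using a length_ls by (simp add: walk_def)
qed

lemma twin_range: "i \<le> m \<Longrightarrow> twin i \<le> length ls \<and> m < twin i"
  by (auto simp: twin_def length_ls)

lemma twin_walk:
  assumes i: "i \<le> m" and c: "walk i dr 0 = Some c" and ins: "nxt i dr \<le> m"
  shows "walk (twin i) (twin_dir dr) 0 = Some c \<and> nxt (twin i) (twin_dir dr) = twin (nxt i dr)"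
proof (cases dr)
  case dT: True
  then have im: "i < m" using ins by (simp add: nxt_def)
  have cc: "c = U ! i" using c dT walk_fwd_U[OF im] by simp
  have npi: "nxt i dr = Suc i" using dT by (simp add: nxt_def)
  show ?thesis
  proof (cases "W = U")
    case True
    show ?thesis unfolding twin_same[OF True] twin_dir_same[OF True] npi
      using walk_fwd_twin_same[OF True im] cc dT by (simp add: nxt_def)
  next
    case False
    show ?thesis unfolding twin_inv[OF False] twin_dir_inv[OF False] npi
      using walk_bwd_twin_inv[OF False im] cc dT im by (simp add: nxt_def)
  qed
next
  case dF: False
  then have i0: "0 < i" using c by (auto simp: walk_def split: if_splits)
  have cc: "c = inv_letter (U ! (i - 1))" using c dF walk_bwd_U[OF i0 i] by simp
  have npi: "nxt i dr = i - 1" using dF by (simp add: nxt_def)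
  show ?thesis
  proof (cases "W = U")
    case True
    show ?thesis unfolding twin_same[OF True] twin_dir_same[OF True] npi
      using walk_bwd_twin_same[OF True i0 i] cc dF i0 by (simp add: nxt_def)
  next
    case False
    show ?thesis unfolding twin_inv[OF False] twin_dir_inv[OF False] npi
      using walk_fwd_twin_inv[OF False i0 i] cc dF i0 i by (simp add: nxt_def)
  qed
qed

lemma twin_walk_exit:
  assumes i: "i \<le> m" and out: "walk i dr 0 = None \<or> m < nxt i dr"
  shows "walk (twin i) (twin_dir dr) 0 \<noteq> Some (a, True)"
proof -
  have lm: "ls ! m = l" using ls_nth[of m] length_ls by simp
  have "(dr \<and> i = m) \<or> (\<not> dr \<and> i = 0)" using out i
    by (auto simp: walk_def nxt_def length_ls split: if_splits)
  then show ?thesis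
  proof
    assume a: "dr \<and> i = m"
    show ?thesis
    proof (cases "W = U")
      case True
      have "twin i = Suc (2 * m)" "twin_dir dr = True"
        using twin_same[OF True] twin_dir_same[OF True] a by auto
      then show ?thesis using length_ls by (simp add: walk_def)
    next
      case False
      have "twin i = Suc m" "twin_dir dr = False" using twin_inv[OF False] twin_dir_inv[OF False] a
        by auto
      then show ?thesis using lm l_direct by (simp add: walk_def inv_letter_def)
    qed
  next
    assume a: "\<not> dr \<and> i = 0"
    show ?thesis
    proof (cases "W = U")
      case True
      have "twin i = Suc m" "twin_dir dr = False" using twin_same[OF True] twin_dir_same[OF True] a
        by auto
      then show ?thesis using lm l_direct by (simp add: walk_def inv_letter_def)
    next
      case False
      have "twin i = Suc (2 * m)" "twin_dir dr = True"
        using twin_inv[OF False] twin_dir_inv[OF False] a by auto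
      then show ?thesis using length_ls by (simp add: walk_def)
    qed
  qed
qed

lemma twin_dir_twin_dir[simp]: "twin_dir (twin_dir dr) = dr" by (simp add: twin_dir_def)

lemma twin_walk_back:
  assumes i: "i \<le> m" and c: "walk (twin i) dr' 0 = Some (a, True)"
  shows "walk i (twin_dir dr') 0 = Some (a, True) \<and> nxt i (twin_dir dr') \<le> m
      \<and> nxt (twin i) dr' = twin (nxt i (twin_dir dr'))"
proof -
  have h1: "walk i (twin_dir dr') 0 \<noteq> None"
  proof
    assume "walk i (twin_dir dr') 0 = None"
    then show False using twin_walk_exit[OF i, of "twin_dir dr'" a] c by simp
  qed
  have h2: "nxt i (twin_dir dr') \<le> m"
  proof (rule ccontr)
    assume "\<not> nxt i (twin_dir dr') \<le> m"
    then show False using twin_walk_exit[OF i, of "twin_dir dr'" a] c by simp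
  qed
  have in1: "walk i (twin_dir dr') 0 \<noteq> None \<and> nxt i (twin_dir dr') \<le> m" using h1 h2 by blast
  then obtain c' where c': "walk i (twin_dir dr') 0 = Some c'" by auto
  from twin_walk[OF i c'] in1 have "walk (twin i) dr' 0 = Some c'
      \<and> nxt (twin i) dr' = twin (nxt i (twin_dir dr'))" by simp
  then show ?thesis using c c' in1 by simp
qed

lemma walk_direct_right:
  assumes i: "i \<le> length ls" "m < i" and c: "walk i dr 0 = Some (a, True)"
  shows "m < nxt i dr"
proof (rule ccontr)
  assume "\<not> m < nxt i dr"
  then have "\<not> dr" "i = Suc m" using i c by (auto simp: nxt_def walk_def split: if_splits)
  moreover have "ls ! m = l" using ls_nth[of m] length_ls by simp
  ultimately show False using c l_direct by (simp add: walk_def inv_letter_def)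
qed

lemma vtx_twin: "i \<le> m \<Longrightarrow> vtx (twin i) = vtx i"
proof -
  assume i: "i \<le> m"
  show ?thesis
  proof (cases "m = 0")
    case True
    then have i0: "i = 0" and U0: "U = []" using i by auto
    have "ls ! 0 = l" using ls_nth[of 0] length_ls True by simp
    moreover have "twin 0 = 1" unfolding twin_def using True by simp
    ultimately show ?thesis using i0 loop[OF U0] vtx_prev[of 1] length_ls by (simp add: vtx_def)
  next
    case False
    obtain dr where dr: "walk i dr 0 \<noteq> None \<and> nxt i dr \<le> m"
    proof (cases "i < m")
      case True
      then show ?thesis using that[of True] length_ls by (auto simp: walk_def nxt_def)
    next
      case False
      then have "0 < i" using \<open>m \<noteq> 0\<close> i by auto
      then show ?thesis using that[of False] i by (auto simp: walk_def nxt_def)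
    qed
    then obtain c where c: "walk i dr 0 = Some c" by auto
    have "walk (twin i) (twin_dir dr) 0 = Some c" using twin_walk[OF i c] dr by simp
    then show ?thesis using walk_vtx[OF _ c] walk_vtx[of "twin i"
        "twin_dir dr" c] twin_range[OF i] i length_ls by simp
  qed
qed

definition twin_coeffs :: "nat \<Rightarrow> nat \<Rightarrow> 'k::field" where
  "twin_coeffs j i = (if i \<le> m \<and> j = twin i then 1 else 0)"

lemma endo_coeffs_twin_coeffs: "endo_coeffs (twin_coeffs :: nat \<Rightarrow> nat \<Rightarrow> 'k::field)"
  unfolding endo_coeffs_def
proof (intro allI impI)
  fix a i k assume a: "a \<in> Arr" and i: "i \<le> length ls" and k: "k \<le> length ls" and pi: "vtx i = s a"
      and pk: "vtx k = t a"
  have R: "opt_coeff (act_inv a k) (\<lambda>j. (twin_coeffs j i :: 'k))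
      = (if i \<le> m \<and> act a (twin i) = Some k then 1 else 0)"
  proof (cases "i \<le> m")
    case True
    have "act_inv a k = Some (twin i) \<longleftrightarrow> act a (twin i) = Some k"
      using act_inv_act[OF k] act_act_inv[of "twin i"] twin_range[OF True] by blast
    then show ?thesis using True by (cases "act_inv a k") (auto simp: twin_coeffs_def)
  next
    case False then show ?thesis by (cases "act_inv a k") (auto simp: twin_coeffs_def)
  qed
  have eq: "(\<exists>i'. act a i = Some i' \<and> i' \<le> m \<and> k = twin i') \<longleftrightarrow> (i \<le> m \<and> act a (twin i) = Some k)"
  proof
    assume "\<exists>i'. act a i = Some i' \<and> i' \<le> m \<and> k = twin i'"
    then obtain i' where i': "act a i = Some i'" "i' \<le> m" "k = twin i'" by blast
    then obtain dr where dr: "walk i dr 0 = Some (a, True)" "i' = nxt i dr" using i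
      by (auto simp: act_iff)
    have im: "i \<le> m" using walk_direct_right[OF i _ dr(1)] dr i' by (meson not_le_imp_less not_less)
    have "walk (twin i) (twin_dir dr) 0 = Some (a, True) \<and> nxt (twin i) (twin_dir dr) = twin i'"
      using twin_walk[OF im dr(1)] dr i' by simp
    then show "i \<le> m \<and> act a (twin i) = Some k" using im twin_range[OF im] i'
      by (auto simp: act_iff)
  next
    assume h: "i \<le> m \<and> act a (twin i) = Some k"
    then obtain dr' where dr': "walk (twin i) dr' 0 = Some (a, True)" "k = nxt (twin i) dr'"
      using twin_range[of i] by (auto simp: act_iff)
    note L2 = twin_walk_back[OF conjunct1[OF h] dr'(1)]
    then show "\<exists>i'. act a i = Some i' \<and> i' \<le> m \<and> k = twin i'"
      using dr' i by (auto simp: act_iff)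
  qed
  have L: "opt_coeff (act a i) (\<lambda>j. (twin_coeffs k j :: 'k))
      = (if \<exists>i'. act a i = Some i' \<and> i' \<le> m \<and> k = twin i' then 1 else 0)"
    by (cases "act a i") (auto simp: twin_coeffs_def)
  show "opt_coeff (act a i) ((twin_coeffs :: nat \<Rightarrow> nat \<Rightarrow> 'k) k)
      = opt_coeff (act_inv a k) (\<lambda>j. twin_coeffs j i)"
    unfolding R using L eq by simp
qed

lemma twin_coeffs_mult_zero: "twin_coeffs k j * twin_coeffs j i = 0"
  using twin_range[of i] by (auto simp: twin_coeffs_def)

lemma not_endo_division_string_rep:
    "\<not> endo_division V Arr s t fibre_dim (string_rep :: 'a \<Rightarrow> 'k::field mat)"
proof
  assume ed: "endo_division V Arr s t fibre_dim (string_rep :: 'a \<Rightarrow> 'k mat)"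
  define f :: "'v \<Rightarrow> 'k mat" where "f = endo_of twin_coeffs"
  define v where "v = vtx 0"
  have v: "v \<in> V" using vtx_in_V[of 0] by (simp add: v_def)
  have P0: "0 \<in> fibre v" by (simp add: fibre_def v_def)
  have P1: "twin 0 \<in> fibre v" using twin_range[of 0] vtx_twin[of 0] by (simp add: fibre_def v_def)
  have "f v $$ (fibre_idx (twin 0), fibre_idx 0) = 1"
    unfolding f_def by (simp add: endo_of_entry[OF P1 P0] twin_coeffs_def)
  moreover have "fibre_idx (twin 0) < fibre_dim v" "fibre_idx 0 < fibre_dim v" using fibre_idx P0 P1
    by auto
  ultimately have fne: "f v \<noteq> 0\<^sub>m (fibre_dim v) (fibre_dim v)" by auto
  obtain g where g: "is_endo V Arr s t fibre_dim string_rep g" "f v * g v = 1\<^sub>m (fibre_dim v)"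
    using ed is_endo_endo_of[OF endo_coeffs_twin_coeffs] fne v unfolding endo_division_def f_def
    by blast
  have "g v \<in> carrier_mat (fibre_dim v) (fibre_dim v)" using g(1) v unfolding is_endo_def by auto
  moreover have "f v * f v = 0\<^sub>m (fibre_dim v) (fibre_dim v)"
    unfolding f_def endo_of_mult twin_coeffs_mult_zero by (simp add: endo_of_zero)
  ultimately show False using square_zero_not_invertible[OF _ _ _ g(2)] fne
    by (simp add: f_def endo_of_carrier)
qed
end

lemma brick_gentle_no_self_concat_word:
  fixes V :: "'v set" and Arr :: "'a set" and s t :: "'a \<Rightarrow> 'v" and Rel :: "('a \<times> 'a) set"
  assumes bg: "brick_gentle TYPE('k::field) V Arr s t Rel"
    and str: "is_string V Arr s t Rel (Word (U @ [l] @ W))" and ld: "snd l"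
    and Wd: "W = U \<or> W = rev (map inv_letter U)" and lp: "U = [] \<Longrightarrow> lsrc s t l = ltgt s t l"
  shows False
proof -
  interpret self_concat_word V Arr s t Rel "U @ [l] @ W" U l W
    by unfold_locales (use brick_gentle_ends[OF bg] str ld Wd lp in auto)
  have "is_rep V Arr s t Rel fibre_dim (string_rep :: 'a \<Rightarrow> 'k mat)"
    by (rule is_rep_string_rep) (use brick_gentle_Rel[OF bg] in blast)
  then have "endo_division V Arr s t fibre_dim (string_rep :: 'a \<Rightarrow> 'k mat)"
    by (rule brick_gentle_endo_division[OF bg _ indecomposable_string_rep])
  moreover have "\<not> endo_division V Arr s t fibre_dim (string_rep :: 'a \<Rightarrow> 'k mat)"
    by (rule not_endo_division_string_rep)
  ultimately show False by contradiction
qed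

lemma brick_gentle_no_raw_self_concat:
  fixes V :: "'v set" and Arr :: "'a set" and s t :: "'a \<Rightarrow> 'v" and Rel :: "('a \<times> 'a) set"
  assumes bg: "brick_gentle TYPE('k::field) V Arr s t Rel"
    and rc: "raw_concat V Arr s t Rel x u v" and uv: "v = u \<or> v = inv_str u"
  shows False
proof -
  obtain l where l: "fst l \<in> Arr" "lsrc s t l = str_tgt s t u" "ltgt s t l = str_src s t v"
    "x = Word (letters u @ [l] @ letters v)" and sx: "is_string V Arr s t Rel x"
    and su: "is_string V Arr s t Rel u" and sv: "is_string V Arr s t Rel v"
    using rc unfolding raw_concat_def by blast
  have loop: "lsrc s t l = ltgt s t l" if lu: "letters u = []"
  proof -
    obtain v0 where u0: "u = Triv v0" using letters_Nil_Triv[OF su lu] by blast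
    then have "v = Triv v0" using uv by auto
    then show ?thesis using l u0 by simp
  qed
  have Wd: "letters v = letters u \<or> letters v = rev (map inv_letter (letters u))"
    using uv letters_inv_str by auto
  show False
  proof (cases "snd l")
    case True
    have sx0: "is_string V Arr s t Rel (Word (letters u @ [l] @ letters v))" using sx l(4) by simp
    show False by (rule brick_gentle_no_self_concat_word[OF bg sx0 True Wd loop])
  next
    case False
    have sx': "is_string V Arr s t Rel
        (Word (letters (inv_str v) @ [inv_letter l] @ letters (inv_str u)))"
      using is_string_inv_str[OF sx] l by (simp add: inv_letter_case_prod letters_inv_str)
    have Wd': "letters (inv_str u) = letters (inv_str v) \<or>
        letters (inv_str u) = rev (map inv_letter (letters (inv_str v)))"
      using uv by (auto simp: letters_inv_str rev_map comp_def)
    have loop': "lsrc s t (inv_letter l) = ltgt s t (inv_letter l)" if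
      lv: "letters (inv_str v) = []"
    proof -
      have "letters v = []" using lv by (simp add: letters_inv_str)
      then obtain v0 where v0: "v = Triv v0" using letters_Nil_Triv[OF sv] by blast
      then have "u = Triv v0" using uv by (cases u) auto
      then show ?thesis using l v0 by simp
    qed
    have ld': "snd (inv_letter l)" using False by simp
    show False by (rule brick_gentle_no_self_concat_word[OF bg sx' ld' Wd' loop'])
  qed
qed

lemma brick_gentle_not_self_concat:
  assumes bg: "brick_gentle TYPE('k::field) V Arr s t Rel" and w: "w \<in> Str V Arr s t Rel"
  shows "\<not> is_concat V Arr s t Rel c w w"
proof
  assume "is_concat V Arr s t Rel c w w"
  then obtain x u v where "u \<in> w" "v \<in> w" "raw_concat V Arr s t Rel x u v"
    by (auto simp: is_concat_def)
  moreover obtain w0 where "w = str_class w0" using w by (auto simp: Str_def)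
  ultimately show False using brick_gentle_no_raw_self_concat[OF bg] str_class_cases by metis
qed

lemma str_closure_singleton:
  assumes bg: "brick_gentle TYPE('k::field) V Arr s t Rel" and w: "w \<in> Str V Arr s t Rel"
  shows "str_closure V Arr s t Rel {w} = {w}"
proof -
  have "str_closed V Arr s t Rel {w}"
    unfolding str_closed_def using brick_gentle_not_self_concat[OF bg w] by blast
  then have "{w} \<in> {Y. {w} \<subseteq> Y \<and> Y \<subseteq> Str V Arr s t Rel \<and> str_closed V Arr s t Rel Y}" using w
    by auto
  then show ?thesis unfolding str_closure_def by blast
qed

lemma repeated_elem_if_long:
  assumes "finite A" "set xs \<subseteq> A" "card A < length xs"
  shows "\<exists>pre y ys suf. xs = pre @ [y] @ ys @ [y] @ suf"
proof -
  have "card (set xs) < length xs" using assms card_mono by (metis le_less_trans)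
  then have "\<not> distinct xs" using distinct_card by fastforce
  then show ?thesis using not_distinct_decomp by blast
qed

lemma is_string_infix:
  assumes "is_string V Arr s t Rel (Word (pre @ ys @ suf))" "ys \<noteq> []"
  shows "is_string V Arr s t Rel (Word ys)"
  using assms by (auto simp: is_string_Word successively_append_iff)

lemma raw_concat_self_if_repeated_letter:
  assumes E: "\<And>a. a \<in> Arr \<Longrightarrow> s a \<in> V \<and> t a \<in> V"
    and st: "is_string V Arr s t Rel (Word ([l] @ y @ [l]))"
  shows "\<exists>u. raw_concat V Arr s t Rel (Word (y @ [l] @ y)) u u"
proof -
  let ?P = "letters_adjacent s t Rel"
  have s3: "successively ?P ([l] @ y @ [l])" and arrs: "fst ` set ([l] @ y @ [l]) \<subseteq> Arr"
    using st by (simp_all add: is_string_Word)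
  have sy: "successively ?P y" and hy: "y \<noteq> [] \<Longrightarrow> ?P l (hd y)" and ly: "y \<noteq> [] \<Longrightarrow> ?P (last y) l"
    and ll: "y = [] \<Longrightarrow> ?P l l"
    using s3 by (auto simp: successively_append_iff successively_Cons)
  have lA: "fst l \<in> Arr" using arrs by simp
  define u where "u = (if y = [] then Triv (ltgt s t l) else Word y)"
  have su: "is_string V Arr s t Rel u"
  proof (cases "y = []")
    case True then show ?thesis using lsrc_V[of Arr s V t l] E lA
      by (simp add: u_def is_string_Triv)
  next
    case False then show ?thesis using sy arrs by (auto simp: u_def is_string_Word)
  qed
  have sx: "is_string V Arr s t Rel (Word (y @ [l] @ y))"
    unfolding is_string_Word using sy hy ly arrs
    by (auto simp: successively_append_iff successively_Cons)
  have "raw_concat V Arr s t Rel (Word (y @ [l] @ y)) u u"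
    unfolding raw_concat_def
  proof (intro conjI exI[of _ l])
    show "lsrc s t l = str_tgt s t u"
      using ly ll by (cases "y = []") (auto simp: u_def letters_adjacent_def)
    show "ltgt s t l = str_src s t u"
      using hy by (cases "y = []") (auto simp: u_def letters_adjacent_def)
  qed (use sx su lA in \<open>auto simp: u_def\<close>)
  then show ?thesis by blast
qed

lemma string_length_bounded:
  fixes V :: "'v set" and Arr :: "'a set" and s t :: "'a \<Rightarrow> 'v" and Rel :: "('a \<times> 'a) set"
  assumes bg: "brick_gentle TYPE('k::field) V Arr s t Rel" and sw: "is_string V Arr s t Rel w"
  shows "length (letters w) \<le> 2 * card Arr"
proof (rule ccontr)
  have E: "\<And>a. a \<in> Arr \<Longrightarrow> s a \<in> V \<and> t a \<in> V" by (rule brick_gentle_ends[OF bg])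
  assume long: "\<not> length (letters w) \<le> 2 * card Arr"
  then obtain ls where w: "w = Word ls" by (cases w) auto
  then have st: "is_string V Arr s t Rel (Word ls)" using sw by simp
  then have "set ls \<subseteq> Arr \<times> UNIV" by (auto simp: is_string_Word)
  moreover have "card (Arr \<times> (UNIV :: bool set)) < length ls"
    using long w by (simp add: card_cartesian_product)
  moreover have "finite (Arr \<times> (UNIV :: bool set))" using brick_gentle_finite_Arr[OF bg] by simp
  ultimately obtain pre l y suf where "ls = pre @ [l] @ y @ [l] @ suf"
    using repeated_elem_if_long by blast
  then have "is_string V Arr s t Rel (Word ([l] @ y @ [l]))"
    using is_string_infix[of V Arr s t Rel pre "[l] @ y @ [l]" suf] st by simp
  with E have "\<exists>u. raw_concat V Arr s t Rel (Word (y @ [l] @ y)) u u"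
    by (rule raw_concat_self_if_repeated_letter)
  then show False using brick_gentle_no_raw_self_concat[OF bg] by blast
qed

lemma str_len_le:
  assumes bg: "brick_gentle TYPE('k::field) V Arr s t Rel" and c: "c \<in> Str V Arr s t Rel"
  shows "str_len c \<le> 2 * card Arr"
proof -
  obtain x where x: "is_string V Arr s t Rel x" "c = str_class x" using c by (auto simp: Str_def)
  then have "str_len c = length (letters x)" using str_len_eq[OF c] str_class_self by blast
  then show ?thesis using string_length_bounded[OF bg x(1)] by simp
qed

section \<open>Covering relations\<close>

definition breaks_meet :: "('a \<Rightarrow> 'v) \<Rightarrow> ('a \<Rightarrow> 'v) \<Rightarrow> ('v, 'a) rawstr set set \<Rightarrow>
    ('v, 'a) rawstr set \<Rightarrow> bool" where
  "breaks_meet s t B w \<longleftrightarrow> (\<forall>x\<in>w. \<forall>(p, q)\<in>breaks s t x. p \<in> B \<or> q \<in> B)"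

lemma breaks_meet_if_mem:
  assumes E: "\<And>a. a \<in> Arr \<Longrightarrow> s a \<in> V \<and> t a \<in> V"
    and co: "str_closed V Arr s t Rel (Str V Arr s t Rel - B)"
    and w: "w \<in> B" "w \<in> Str V Arr s t Rel"
  shows "breaks_meet s t B w"
proof -
  have "p \<in> B \<or> q \<in> B" if x: "x \<in> w" and pq: "(p, q) \<in> breaks s t x" for x p q
  proof (rule ccontr)
    assume "\<not> (p \<in> B \<or> q \<in> B)"
    then have "w \<in> Str V Arr s t Rel - B"
      using str_closedD[OF co, of q p w] breaks_props[OF E w(2) x pq] w by auto
    then show False using w by simp
  qed
  then show ?thesis unfolding breaks_meet_def by blast
qed

lemma breaks_meet_if_shortest:
  assumes E: "\<And>a. a \<in> Arr \<Longrightarrow> s a \<in> V \<and> t a \<in> V"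
    and co': "str_closed V Arr s t Rel (Str V Arr s t Rel - B')" and B': "B' \<subseteq> Str V Arr s t Rel"
    and w: "w \<in> B' - B" and shortest: "\<And>y. y \<in> B' - B \<Longrightarrow> str_len w \<le> str_len y"
  shows "breaks_meet s t B w"
proof -
  have wS: "w \<in> Str V Arr s t Rel" using w B' by auto
  have "p \<in> B \<or> q \<in> B" if x: "x \<in> w" and pq: "(p, q) \<in> breaks s t x" for x p q
  proof (rule ccontr)
    assume out: "\<not> (p \<in> B \<or> q \<in> B)"
    note bp = breaks_props[OF E wS x pq]
    have "p \<notin> B'" using shortest[of p] out bp by (meson DiffI leD)
    moreover have "q \<notin> B'" using shortest[of q] out bp by (meson DiffI leD)
    ultimately have "w \<in> Str V Arr s t Rel - B'" using str_closedD[OF co', of q p w] bp wS by auto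
    then show False using w by simp
  qed
  then show ?thesis unfolding breaks_meet_def by blast
qed

text \<open>The hypothesis on shorter members of B is the induction hypothesis of
  concat_with_longest_mem.\<close>

lemma concat_left_break_meets:
  assumes E: "\<And>a. a \<in> Arr \<Longrightarrow> s a \<in> V \<and> t a \<in> V"
    and cl: "str_closed V Arr s t Rel B" and co: "str_closed V Arr s t Rel (Str V Arr s t Rel - B)"
    and BS: "B \<subseteq> Str V Arr s t Rel"
    and w: "w \<in> Str V Arr s t Rel" "breaks_meet s t B w" and b: "b \<in> B"
    and shorter: "\<forall>b'\<in>B. str_len b' < str_len b \<longrightarrow>
        (\<forall>c\<in>Str V Arr s t Rel. is_concat V Arr s t Rel c b' w \<longrightarrow> c \<in> B)"
    and rc: "raw_concat V Arr s t Rel x u v" and r: "(u \<in> w \<and> v \<in> b) \<or> (u \<in> b \<and> v \<in> w)"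
    and j: "1 \<le> j" "j \<le> length (letters u)"
  shows "str_class (split_high s t (letters x) j) \<in> B \<or> str_class (split_low s t (letters x) j) \<in> B"
proof -
  define u1 u2 H where "u1 = split_low s t (letters u) j" and "u2 = split_high s t (letters u) j"
    and "H = split_high s t (letters x) j"
  have low: "split_low s t (letters x) j = u1"
    using raw_concat_split_left(1)[OF E rc j] by (simp add: u1_def)
  have rcH: "raw_concat V Arr s t Rel H u2 v"
    using raw_concat_split_left(2)[OF E rc j] by (simp add: u2_def H_def)
  have su: "is_string V Arr s t Rel u" using raw_concat_strings[OF rc] by simp
  have ruu: "raw_concat V Arr s t Rel u u1 u2"
    unfolding u1_def u2_def by (rule raw_concat_split_string[OF E su j])
  have cS: "str_class u1 \<in> Str V Arr s t Rel" "str_class u2 \<in> Str V Arr s t Rel"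
    "str_class H \<in> Str V Arr s t Rel"
    using raw_concat_strings[OF ruu] raw_concat_strings[OF rcH] Str_memI by auto
  have bS: "b \<in> Str V Arr s t Rel" using b BS by auto
  have "breaks_meet s t B (str_class u)"
  proof (cases "u \<in> w")
    case True
    then show ?thesis using w Str_memD(1) by metis
  next
    case False
    then have "b = str_class u" using r Str_memD(1)[OF bS] by blast
    then show ?thesis using breaks_meet_if_mem[OF E co b bS] by simp
  qed
  then have "str_class u2 \<in> B \<or> str_class u1 \<in> B"
    using raw_concat_breaks[OF ruu] str_class_self unfolding breaks_meet_def by blast
  then show ?thesis
  proof
    assume u2B: "str_class u2 \<in> B"
    have "str_class H \<in> B"
    proof (cases "v \<in> b")
      case True
      then have "is_concat V Arr s t Rel (str_class H) (str_class u2) b"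
        unfolding is_concat_def using rcH str_class_self by blast
      then show ?thesis using str_closedD[OF cl u2B b cS(3)] by simp
    next
      case False
      then have ub: "u \<in> b" and vw: "v \<in> w" using r by auto
      have "str_len (str_class u2) < str_len b"
        using str_len_eq[OF cS(2) str_class_self] str_len_eq[OF bS ub] j
        by (simp add: u2_def letters_split_high)
      moreover have "is_concat V Arr s t Rel (str_class H) (str_class u2) w"
        unfolding is_concat_def using rcH vw str_class_self by blast
      ultimately show ?thesis using shorter u2B cS(3) by blast
    qed
    then show ?thesis by (simp add: H_def)
  qed (simp add: low)
qed

lemma concat_break_meets:
  assumes E: "\<And>a. a \<in> Arr \<Longrightarrow> s a \<in> V \<and> t a \<in> V"
    and cl: "str_closed V Arr s t Rel B" and co: "str_closed V Arr s t Rel (Str V Arr s t Rel - B)"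
    and BS: "B \<subseteq> Str V Arr s t Rel"
    and w: "w \<in> Str V Arr s t Rel" "breaks_meet s t B w" and b: "b \<in> B"
    and shorter: "\<forall>b'\<in>B. str_len b' < str_len b \<longrightarrow>
        (\<forall>c\<in>Str V Arr s t Rel. is_concat V Arr s t Rel c b' w \<longrightarrow> c \<in> B)"
    and rc: "raw_concat V Arr s t Rel x u v" and r: "(u \<in> w \<and> v \<in> b) \<or> (u \<in> b \<and> v \<in> w)"
    and j: "1 \<le> j" "j \<le> length (letters x)"
  shows "str_class (split_high s t (letters x) j) \<in> B \<or> str_class (split_low s t (letters x) j) \<in> B"
proof -
  have bS: "b \<in> Str V Arr s t Rel" using b BS by auto
  have left: "str_class (split_high s t (letters x) j) \<in> B
      \<or> str_class (split_low s t (letters x) j) \<in> B"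
    if "raw_concat V Arr s t Rel x u v" "(u \<in> w \<and> v \<in> b) \<or> (u \<in> b \<and> v \<in> w)"
      "1 \<le> j" "j \<le> length (letters u)" for x u v j
    by (rule concat_left_break_meets[OF _ cl co BS w b shorter that]) (fact E)
  have lenx: "length (letters x) = length (letters u) + 1 + length (letters v)"
    by (rule raw_concat_len[OF rc])
  consider "j \<le> length (letters u)" | "j = Suc (length (letters u))" |
      "Suc (length (letters u)) < j"
    by linarith
  then show ?thesis
  proof cases
    case 1
    then show ?thesis using left[OF rc r j(1)] by simp
  next
    case 2
    then have "split_high s t (letters x) j = v" "split_low s t (letters x) j = u"
      using split_raw_concat[OF rc] by auto
    moreover have "str_class v = b \<or> str_class u = b" using r Str_memD(1)[OF bS] by blast
    ultimately show ?thesis using b by auto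
  next
    case 3
    \<comment> \<open>a break inside the right factor is a break inside the left factor of the inverse\<close>
    define j' where "j' = Suc (length (letters x)) - j"
    have r': "(inv_str v \<in> w \<and> inv_str u \<in> b) \<or> (inv_str v \<in> b \<and> inv_str u \<in> w)"
      using r Str_inv_str_mem[OF w(1)] Str_inv_str_mem[OF bS] by blast
    have j': "1 \<le> j'" "j' \<le> length (letters (inv_str v))"
      using j 3 lenx by (auto simp: j'_def length_letters_inv_str)
    have "split_low s t (letters (inv_str x)) j' = inv_str (split_high s t (letters x) j)"
      "split_high s t (letters (inv_str x)) j' = inv_str (split_low s t (letters x) j)"
      unfolding letters_inv_str j'_def using split_inv_str[OF j] by auto
    then show ?thesis using left[OF raw_concat_inv_str[OF rc] r' j'] by auto
  qed
qed

lemma breaks_meet_concat: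
  assumes E: "\<And>a. a \<in> Arr \<Longrightarrow> s a \<in> V \<and> t a \<in> V"
    and cl: "str_closed V Arr s t Rel B" and co: "str_closed V Arr s t Rel (Str V Arr s t Rel - B)"
    and BS: "B \<subseteq> Str V Arr s t Rel"
    and w: "w \<in> Str V Arr s t Rel" "breaks_meet s t B w" and b: "b \<in> B"
    and shorter: "\<forall>b'\<in>B. str_len b' < str_len b \<longrightarrow>
        (\<forall>c\<in>Str V Arr s t Rel. is_concat V Arr s t Rel c b' w \<longrightarrow> c \<in> B)"
    and c: "c \<in> Str V Arr s t Rel"
    and conc: "is_concat V Arr s t Rel c w b \<or> is_concat V Arr s t Rel c b w"
  shows "breaks_meet s t B c"
proof -
  have bS: "b \<in> Str V Arr s t Rel" using b BS by auto
  have "p \<in> B \<or> q \<in> B" if x: "x \<in> c" and pq: "(p, q) \<in> breaks s t x" for x p q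
  proof -
    obtain u v where rc: "raw_concat V Arr s t Rel x u v"
      and r: "(u \<in> w \<and> v \<in> b) \<or> (u \<in> b \<and> v \<in> w)"
      using conc is_concat_representatives[OF c w(1) bS _ x]
        is_concat_representatives[OF c bS w(1) _ x] by blast
    obtain j where j: "1 \<le> j" "j \<le> length (letters x)"
      and "p = str_class (split_high s t (letters x) j)"
          "q = str_class (split_low s t (letters x) j)"
      using pq unfolding breaks_def by blast
    then show ?thesis using concat_break_meets[OF E cl co BS w b shorter rc r j] by simp
  qed
  then show ?thesis unfolding breaks_meet_def by blast
qed

lemma concat_with_longest_mem:
  assumes E: "\<And>a. a \<in> Arr \<Longrightarrow> s a \<in> V \<and> t a \<in> V"
    and cl: "str_closed V Arr s t Rel B" and co: "str_closed V Arr s t Rel (Str V Arr s t Rel - B)"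
    and cl': "str_closed V Arr s t Rel B'" and BB': "B \<subseteq> B'" and B': "B' \<subseteq> Str V Arr s t Rel"
    and w: "w \<in> B' - B" "breaks_meet s t B w"
    and longest: "\<And>y. y \<in> B' - B \<Longrightarrow> breaks_meet s t B y \<Longrightarrow> str_len y \<le> str_len w"
  shows "b \<in> B \<Longrightarrow> c \<in> Str V Arr s t Rel \<Longrightarrow>
    is_concat V Arr s t Rel c w b \<or> is_concat V Arr s t Rel c b w \<Longrightarrow> c \<in> B"
proof (induction "str_len b" arbitrary: b c rule: less_induct)
  case less
  have wS: "w \<in> Str V Arr s t Rel" using w B' by auto
  have BS: "B \<subseteq> Str V Arr s t Rel" using BB' B' by auto
  show ?case
  proof (rule ccontr)
    assume "c \<notin> B"
    moreover have "c \<in> B'" using less.prems str_closedD[OF cl'] BB' w by blast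
    moreover have "breaks_meet s t B c"
    proof (rule breaks_meet_concat[OF E cl co BS wS w(2) less.prems(1) _ less.prems(2,3)])
      show "\<forall>b'\<in>B. str_len b' < str_len b \<longrightarrow>
          (\<forall>c\<in>Str V Arr s t Rel. is_concat V Arr s t Rel c b' w \<longrightarrow> c \<in> B)"
        using less.hyps by blast
    qed
    ultimately have "str_len c \<le> str_len w" using longest by blast
    moreover have "str_len w < str_len c"
      using less.prems is_concat_str_len[OF less.prems(2)] wS BS by fastforce
    ultimately show False by simp
  qed
qed

lemma str_closed_insert:
  assumes cl: "str_closed V Arr s t Rel B"
    and not_self: "\<And>c. \<not> is_concat V Arr s t Rel c w w"
    and absorb: "\<And>b c. b \<in> B \<Longrightarrow> c \<in> Str V Arr s t Rel \<Longrightarrow>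
        is_concat V Arr s t Rel c w b \<or> is_concat V Arr s t Rel c b w \<Longrightarrow> c \<in> B"
  shows "str_closed V Arr s t Rel (insert w B)"
  unfolding str_closed_def
proof (intro ballI impI)
  fix a b c assume a: "a \<in> insert w B" and b: "b \<in> insert w B" and c: "c \<in> Str V Arr s t Rel"
    and ic: "is_concat V Arr s t Rel c a b"
  consider "a = w" "b = w" | "a = w" "b \<in> B" | "a \<in> B" "b = w" | "a \<in> B" "b \<in> B"
    using a b by blast
  then show "c \<in> insert w B"
  proof cases
    case 1
    then show ?thesis using not_self ic by simp
  next
    case 2
    then show ?thesis using absorb[OF _ c] ic by blast
  next
    case 3
    then show ?thesis using absorb[OF _ c] ic by blast
  next
    case 4
    then show ?thesis using str_closedD[OF cl _ _ c ic] by blast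
  qed
qed

lemma str_closed_Diff_insert:
  assumes co: "str_closed V Arr s t Rel (Str V Arr s t Rel - B)" and w: "breaks_meet s t B w"
  shows "str_closed V Arr s t Rel (Str V Arr s t Rel - insert w B)"
  unfolding str_closed_def
proof (intro ballI impI)
  fix a b c assume a: "a \<in> Str V Arr s t Rel - insert w B"
    and b: "b \<in> Str V Arr s t Rel - insert w B"
    and c: "c \<in> Str V Arr s t Rel" and ic: "is_concat V Arr s t Rel c a b"
  have "c \<noteq> w"
  proof
    assume "c = w"
    then obtain x u v where x: "x \<in> w" and u: "u \<in> a" and v: "v \<in> b"
      and rc: "raw_concat V Arr s t Rel x u v"
      using ic unfolding is_concat_def by blast
    have "str_class u = a" "str_class v = b" using Str_memD(1) a b u v by blast+
    then have "(b, a) \<in> breaks s t x" using raw_concat_breaks[OF rc] by simp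
    then have "b \<in> B \<or> a \<in> B" using w x unfolding breaks_meet_def by blast
    then show False using a b by blast
  qed
  then show "c \<in> Str V Arr s t Rel - insert w B" using str_closedD[OF co _ _ c ic] a b by blast
qed

lemma biclosed_insert:
  assumes bic: "biclosed V Arr s t Rel B"
    and w: "w \<in> Str V Arr s t Rel" "breaks_meet s t B w"
    and not_self: "\<And>c. \<not> is_concat V Arr s t Rel c w w"
    and absorb: "\<And>b c. b \<in> B \<Longrightarrow> c \<in> Str V Arr s t Rel \<Longrightarrow>
        is_concat V Arr s t Rel c w b \<or> is_concat V Arr s t Rel c b w \<Longrightarrow> c \<in> B"
  shows "biclosed V Arr s t Rel (insert w B)"
proof -
  have "B \<subseteq> Str V Arr s t Rel" and cl: "str_closed V Arr s t Rel B"
    and co: "str_closed V Arr s t Rel (Str V Arr s t Rel - B)"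
    using bic unfolding biclosed_def by auto
  moreover have "str_closed V Arr s t Rel (insert w B)"
    by (rule str_closed_insert[OF cl], fact not_self, fact absorb)
  ultimately show ?thesis using str_closed_Diff_insert[OF co w(2)] w(1) unfolding biclosed_def
    by blast
qed

lemma card_break_inter:
  assumes E: "\<And>a. a \<in> Arr \<Longrightarrow> s a \<in> V \<and> t a \<in> V" and cl: "str_closed V Arr s t Rel B"
    and w: "w \<in> Str V Arr s t Rel" "w \<notin> B" "breaks_meet s t B w"
    and x: "x \<in> w" and pq: "(p, q) \<in> breaks s t x"
  shows "card ({p, q} \<inter> B) = 1"
proof -
  have "p \<in> B \<or> q \<in> B" using w(3) x pq unfolding breaks_meet_def by blast
  moreover have "\<not> (p \<in> B \<and> q \<in> B)"
    using str_closedD[OF cl, of q p w] breaks_props[OF E w(1) x pq] w(1,2) by blast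
  ultimately have "{p, q} \<inter> B = {p} \<or> {p, q} \<inter> B = {q}" by blast
  then show ?thesis by auto
qed

theorem bic_covers_insert:
  assumes bg: "brick_gentle TYPE('k::field) V Arr s t Rel" and cov: "bic_covers V Arr s t Rel B B'"
  shows "\<exists>w\<in>Str V Arr s t Rel. w \<notin> B \<and> B' = insert w B \<and>
           (\<forall>x\<in>w. \<forall>(p, q)\<in>breaks s t x. card ({p, q} \<inter> B) = 1)"
proof -
  have E: "\<And>a. a \<in> Arr \<Longrightarrow> s a \<in> V \<and> t a \<in> V" by (rule brick_gentle_ends[OF bg])
  have bic: "biclosed V Arr s t Rel B" and BB': "B \<subset> B'" and cl': "str_closed V Arr s t Rel B'"
    and co': "str_closed V Arr s t Rel (Str V Arr s t Rel - B')" and B': "B' \<subseteq> Str V Arr s t Rel"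
    and cover: "\<not> (\<exists>C. biclosed V Arr s t Rel C \<and> B \<subset> C \<and> C \<subset> B')"
    using cov unfolding bic_covers_def biclosed_def by auto
  then have cl: "str_closed V Arr s t Rel B"
    and co: "str_closed V Arr s t Rel (Str V Arr s t Rel - B)"
    unfolding biclosed_def by auto
  obtain w0 where w0: "w0 \<in> B' - B" and shortest: "\<forall>y. y \<in> B' - B \<longrightarrow> str_len w0 \<le> str_len y"
    using BB' ex_has_least_nat[of "\<lambda>y. y \<in> B' - B" _ str_len] by blast
  have "breaks_meet s t B w0"
    by (rule breaks_meet_if_shortest[OF E co' B' w0]) (use shortest in auto)
  moreover have "\<forall>y. y \<in> B' - B \<and> breaks_meet s t B y \<longrightarrow> str_len y < Suc (2 * card Arr)"
    using str_len_le[OF bg] B' by (meson DiffD1 less_Suc_eq_le subsetD)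
  ultimately obtain w where w: "w \<in> B' - B" "breaks_meet s t B w"
    and longest: "\<forall>y. y \<in> B' - B \<and> breaks_meet s t B y \<longrightarrow> str_len y \<le> str_len w"
    using ex_has_greatest_nat[of "\<lambda>y. y \<in> B' - B \<and> breaks_meet s t B y" w0] w0 by blast
  have wS: "w \<in> Str V Arr s t Rel" using w B' by auto
  have absorb: "c \<in> B" if "b \<in> B" "c \<in> Str V Arr s t Rel"
    "is_concat V Arr s t Rel c w b \<or> is_concat V Arr s t Rel c b w" for b c
    by (rule concat_with_longest_mem[OF E cl co cl' _ B' w _ that]) (use BB' longest in auto)
  have "biclosed V Arr s t Rel (insert w B)"
    by (rule biclosed_insert[OF bic wS w(2) brick_gentle_not_self_concat[OF bg wS] absorb])
  then have "B' = insert w B" using cover BB' w by blast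
  moreover have "\<forall>x\<in>w. \<forall>(p, q)\<in>breaks s t x. card ({p, q} \<inter> B) = 1"
    using card_break_inter[OF E cl wS _ w(2)] w by blast
  ultimately show ?thesis using wS w by blast
qed

theorem lemma5p4:
  fixes V :: "'v set" and Arr :: "'a set" and s t :: "'a \<Rightarrow> 'v" and Rel :: "('a \<times> 'a) set"
  assumes "brick_gentle TYPE('k::field) V Arr s t Rel"
  shows "(\<forall>w\<in>Str V Arr s t Rel. str_closure V Arr s t Rel {w} = {w}) \<and>
         (\<forall>B B'. bic_covers V Arr s t Rel B B' \<longrightarrow>
            (\<exists>w\<in>Str V Arr s t Rel. w \<notin> B \<and> B' = insert w B \<and>
               (\<forall>x\<in>w. \<forall>(p, q)\<in>breaks s t x. card ({p, q} \<inter> B) = 1)))"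
  using str_closure_singleton[OF assms] bic_covers_insert[OF assms] by blast

end
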